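(* In the one-dimensional setting described in the context, assume that $\mathbf b$ is constant and that the following uniform inf-sup hypothesis holds: there is a constant $\alpha_{\mathrm{MQ}}>0$, depending only on $p$ and the coarsening structure and independent of $h$, such that \[ \sup_{v_h\in V_h\setminus\{0\}}\frac{(v_h,q_h)_{0,I}}{\|v_h\|_{0,I}}\ge\alpha_{\mathrm{MQ}}\|q_h\|_{0,I}\qquad\forall q_h\in Q_L . \] Let the stabilization parameter satisfy \[ 0\le\tau_h\le C_\tau\,c_L^{-1}\,\frac{h^2}{\max\{\varepsilon,\;h\|\mathbf b\|_{0,\infty}\}} \] for a constant $C_\tau>0$. Then there exists $\beta>0$, independent of $h$ and $\varepsilon$, such that \[ \sup_{v_h\in V_h}\frac{a_{\mathrm{MQ}}(u_h,v_h)}{\|v_h\|_{\mathrm{MQSD}}}\ge\beta\,\|u_h\|_{\mathrm{MQSD}}\qquad\forall u_h\in V_h . \]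
   Context: Let $I$ be a bounded interval, $(\cdot,\cdot)$ and $\|\cdot\|_0=\|\cdot\|_{0,I}$ the $L^2(I)$ inner product and norm, $|\cdot|_1$ the $H^1(I)$ seminorm, $\|\cdot\|_{0,\infty}$ the $L^\infty(I)$ norm. Consider $-\varepsilon u''+\mathbf b u'+cu=f$ on $I$ with homogeneous Dirichlet conditions, $\varepsilon>0$, $\mathbf b\in\mathbb R$, $c\in L^\infty(I)$, $f\in L^2(I)$, $\sigma:=c-\tfrac12\mathbf b'\ge\sigma_0>0$ a.e. (so $\sigma=c$ here). Let $a(u,v)=\varepsilon(u',v')+(\mathbf b u',v)+(cu,v)$. Let $\mathcal T_h$ be a uniform mesh of $I$ of size $h$, $\mathcal S^p(\mathcal T_h)$ the B-spline space of degree $p\ge2$ on the corresponding open knot vector (simple interior knots), and $V_h:=\mathcal S^p(\mathcal T_h)\cap H^1_0(I)$. Dyadic coarsening: $\mathcal M_h^{(0)}=\mathcal T_h$ and $\mathcal M_h^{(k)}$ ($k=1,\dots,L$) is obtained from $\mathcal M_h^{(k-1)}$ by removing every second interior knot, so its mesh size is $H^{(k)}=2^kh$; set $c_k:=h/H^{(k)}$. Let $Q_L:=\mathcal S^{p-1}(\mathcal M_h^{(L)})$ be the B-spline space of degree $p-1$ on the coarsest mesh. For each $k$, $\Pi_k^p$ is a linear quasi-interpolation projector onto the degree-$p$ B-spline space $\mathcal S^p(\mathcal M_h^{(k)})$, stable in $L^2$ ($\|\Pi_k^pv\|_0\le C_{\Pi_k^p}\|v\|_0$) and satisfying the approximation estimates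 $\|u-\Pi_k^pu\|_{H^r}\le C_{\Pi_k^p}(H^{(k)})^{s-r}\|u\|_{H^s}$, $0\le r\le s\le p+1$. With $\tau_h\ge0$ define \[ s_{\mathrm{MQ}}(u,v)=\tau_h\sum_{k=1}^Lc_k\int_I\big(\mathbf b\,(u-\Pi_k^pu)'\big)\big(\mathbf b\,(v-\Pi_k^pv)'\big)\,dx,\quad a_{\mathrm{MQ}}=a+s_{\mathrm{MQ}}, \] $\|v\|_G^2=\varepsilon|v|_1^2+\|\sigma^{1/2}v\|_0^2$, $\|v\|_{\mathrm{MQ}}^2=\|v\|_G^2+s_{\mathrm{MQ}}(v,v)$, and \[ \|v\|_{\mathrm{MQSD}}=\big(\|v\|_G^2+s_{\mathrm{MQ}}(v,v)+\tau_hc_L\|\mathbf b\,v'\|_0^2\big)^{1/2}. \] *)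

theory Defs
  imports "HOL-Analysis.Analysis" "HOL-Computational_Algebra.Polynomial"
begin

definition L2_on :: "real \<Rightarrow> real \<Rightarrow> (real \<Rightarrow> real) \<Rightarrow> bool" where
  "L2_on a0 b0 v \<longleftrightarrow> set_borel_measurable lborel {a0..b0} v
      \<and> set_integrable lborel {a0..b0} (\<lambda>x. (v x)\<^sup>2)"

definition ip :: "real \<Rightarrow> real \<Rightarrow> (real \<Rightarrow> real) \<Rightarrow> (real \<Rightarrow> real) \<Rightarrow> real" where
  "ip a0 b0 u v = (LINT x:{a0..b0}|lborel. u x * v x)"

definition l2norm :: "real \<Rightarrow> real \<Rightarrow> (real \<Rightarrow> real) \<Rightarrow> real" where
  "l2norm a0 b0 v = sqrt (ip a0 b0 v v)"

text \<open>The B-spline space of degree q on the open knot vector with simple interior knots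
  is the space of piecewise polynomials of degree at most q which are C^(q-1)
  at the interior knots (Curry-Schoenberg).\<close>

definition knot :: "real \<Rightarrow> real \<Rightarrow> nat \<Rightarrow> nat \<Rightarrow> real" where
  "knot a0 b0 n j = a0 + real j * (b0 - a0) / real n"

definition spline_space :: "real \<Rightarrow> real \<Rightarrow> nat \<Rightarrow> nat \<Rightarrow> (real \<Rightarrow> real) set" where
  "spline_space a0 b0 n q = {f. \<exists>P :: nat \<Rightarrow> real poly.
      (\<forall>j<n. degree (P j) \<le> q \<and>
             (\<forall>x\<in>{knot a0 b0 n j .. knot a0 b0 n (Suc j)}. f x = poly (P j) x)) \<and>
      (\<forall>j. 0 < j \<and> j < n \<longrightarrow>
             (\<forall>k<q. poly ((pderiv ^^ k) (P (j - 1))) (knot a0 b0 n j)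
                   = poly ((pderiv ^^ k) (P j)) (knot a0 b0 n j)))}"

text \<open>V_h = S^p(T_h) \<inter> H^1_0(I) (spline functions are continuous, so the trace is the value).\<close>
definition Vh :: "real \<Rightarrow> real \<Rightarrow> nat \<Rightarrow> nat \<Rightarrow> (real \<Rightarrow> real) set" where
  "Vh a0 b0 N p = {v \<in> spline_space a0 b0 N p. v a0 = 0 \<and> v b0 = 0}"

definition nonzero_on :: "real \<Rightarrow> real \<Rightarrow> (real \<Rightarrow> real) \<Rightarrow> bool" where
  "nonzero_on a0 b0 v \<longleftrightarrow> (\<exists>x\<in>{a0..b0}. v x \<noteq> 0)"

definition test_fun :: "real \<Rightarrow> real \<Rightarrow> (real \<Rightarrow> real) \<Rightarrow> bool" where
  "test_fun a0 b0 \<phi> \<longleftrightarrow> (\<forall>k x. (deriv ^^ k) \<phi> differentiable (at x)) \<and>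
     (\<exists>c d. a0 < c \<and> d < b0 \<and> (\<forall>x. x \<notin> {c..d} \<longrightarrow> \<phi> x = 0))"

definition weak_deriv :: "real \<Rightarrow> real \<Rightarrow> (real \<Rightarrow> real) \<Rightarrow> (real \<Rightarrow> real) \<Rightarrow> bool" where
  "weak_deriv a0 b0 u g \<longleftrightarrow> (\<forall>\<phi>. test_fun a0 b0 \<phi> \<longrightarrow>
      (LINT x:{a0..b0}|lborel. u x * deriv \<phi> x) = - (LINT x:{a0..b0}|lborel. g x * \<phi> x))"

definition weak_derivs :: "real \<Rightarrow> real \<Rightarrow> nat \<Rightarrow> (real \<Rightarrow> real) \<Rightarrow> (nat \<Rightarrow> real \<Rightarrow> real) \<Rightarrow> bool" where
  "weak_derivs a0 b0 s u D \<longleftrightarrow>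
     (AE x in lborel. x \<in> {a0..b0} \<longrightarrow> D 0 x = u x) \<and>
     (\<forall>j\<le>s. L2_on a0 b0 (D j)) \<and>
     (\<forall>j<s. weak_deriv a0 b0 (D j) (D (Suc j)))"

definition sobolev_norm :: "real \<Rightarrow> real \<Rightarrow> nat \<Rightarrow> (nat \<Rightarrow> real \<Rightarrow> real) \<Rightarrow> real" where
  "sobolev_norm a0 b0 s D = sqrt (\<Sum>j\<le>s. (l2norm a0 b0 (D j))\<^sup>2)"

definition quasi_interp :: "real \<Rightarrow> real \<Rightarrow> nat \<Rightarrow> nat \<Rightarrow> real \<Rightarrow> real
     \<Rightarrow> ((real \<Rightarrow> real) \<Rightarrow> real \<Rightarrow> real) \<Rightarrow> bool" where
  "quasi_interp a0 b0 nk p Hk C Proj \<longleftrightarrow>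
     (\<forall>v. L2_on a0 b0 v \<longrightarrow> Proj v \<in> spline_space a0 b0 nk p) \<and>
     (\<forall>u v \<alpha> \<beta>. L2_on a0 b0 u \<longrightarrow> L2_on a0 b0 v \<longrightarrow>
        (\<forall>x\<in>{a0..b0}. Proj (\<lambda>y. \<alpha> * u y + \<beta> * v y) x = \<alpha> * Proj u x + \<beta> * Proj v x)) \<and>
     (\<forall>v\<in>spline_space a0 b0 nk p. \<forall>x\<in>{a0..b0}. Proj v x = v x) \<and>
     (\<forall>v. L2_on a0 b0 v \<longrightarrow> l2norm a0 b0 (Proj v) \<le> C * l2norm a0 b0 v) \<and>
     (\<forall>r s u Du De. r \<le> s \<longrightarrow> s \<le> p + 1 \<longrightarrow>
        weak_derivs a0 b0 s u Du \<longrightarrow>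
        weak_derivs a0 b0 r (\<lambda>x. u x - Proj u x) De \<longrightarrow>
        sobolev_norm a0 b0 r De \<le> C * Hk ^ (s - r) * sobolev_norm a0 b0 s Du)"

text \<open>N = number of cells of T_h, h = (b0-a0)/N, coarse level k has N div 2^k cells,
  c_k = 1/2^k. bb is the constant convection, c the reaction coefficient (sigma = c).\<close>

definition a_form :: "real \<Rightarrow> real \<Rightarrow> real \<Rightarrow> real \<Rightarrow> (real \<Rightarrow> real)
     \<Rightarrow> (real \<Rightarrow> real) \<Rightarrow> (real \<Rightarrow> real) \<Rightarrow> real" where
  "a_form a0 b0 \<epsilon> bb c u v =
     \<epsilon> * (LINT x:{a0..b0}|lborel. deriv u x * deriv v x)
     + (LINT x:{a0..b0}|lborel. bb * deriv u x * v x)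
     + (LINT x:{a0..b0}|lborel. c x * u x * v x)"

definition s_MQ :: "real \<Rightarrow> real \<Rightarrow> nat \<Rightarrow> real \<Rightarrow> real
     \<Rightarrow> (nat \<Rightarrow> (real \<Rightarrow> real) \<Rightarrow> real \<Rightarrow> real) \<Rightarrow> (real \<Rightarrow> real) \<Rightarrow> (real \<Rightarrow> real) \<Rightarrow> real" where
  "s_MQ a0 b0 L \<tau> bb Proj u v = \<tau> * (\<Sum>k\<in>{1..L}. (1 / 2 ^ k) *
     (LINT x:{a0..b0}|lborel. (bb * deriv (\<lambda>y. u y - Proj k u y) x)
                             * (bb * deriv (\<lambda>y. v y - Proj k v y) x)))"

definition a_MQ where
  "a_MQ a0 b0 L \<epsilon> bb c \<tau> Proj u v = a_form a0 b0 \<epsilon> bb c u v + s_MQ a0 b0 L \<tau> bb Proj u v"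

definition G_norm_sq :: "real \<Rightarrow> real \<Rightarrow> real \<Rightarrow> (real \<Rightarrow> real) \<Rightarrow> (real \<Rightarrow> real) \<Rightarrow> real" where
  "G_norm_sq a0 b0 \<epsilon> c v = \<epsilon> * (LINT x:{a0..b0}|lborel. (deriv v x)\<^sup>2)
     + (LINT x:{a0..b0}|lborel. c x * (v x)\<^sup>2)"

definition MQSD_norm where
  "MQSD_norm a0 b0 L \<epsilon> bb c \<tau> Proj v = sqrt (G_norm_sq a0 b0 \<epsilon> c v + s_MQ a0 b0 L \<tau> bb Proj v v
     + \<tau> * (1 / 2 ^ L) * (LINT x:{a0..b0}|lborel. (bb * deriv v x)\<^sup>2))"

end

theory Submission
  imports Defs
begin

text \<open>The squared MQSD norm of \<open>u\<close> is \<open>A + B + S + T\<close>: diffusion, reaction, stabilisation and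
  the streamline-diffusion term \<open>T = \<tau> c\<^sub>L b\<^sup>2 |u'|\<^sup>2\<close>. Since \<open>(b u', u) = 0\<close>, testing with \<open>u\<close> itself
  gives \<open>a\<^sub>M\<^sub>Q(u, u) = A + B + S\<close>. Up to the coarsest stabilisation term, \<open>T\<close> is \<open>R = \<tau> c\<^sub>L b\<^sup>2 |q|\<^sup>2\<close>
  with \<open>q = (\<Pi>\<^sub>L u)' \<in> Q\<^sub>L\<close>; the inf-sup condition gives \<open>z \<in> V\<^sub>h\<close> with \<open>|z| = |q|\<close> and
  \<open>(q, z) \<ge> \<alpha>/2 |q|\<^sup>2\<close>, so testing additionally with \<open>\<delta> \<tau> c\<^sub>L b z\<close> produces \<open>\<delta> \<alpha>/2 R\<close>. The remaining
  cross terms are absorbed by Young's inequality: the inverse estimate \<open>|z'| \<lesssim> |z|/h\<close> together with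
  \<open>\<tau> c\<^sub>L \<le> C\<^sub>\<tau> h\<^sup>2 / max(\<epsilon>, h|b|)\<close> bounds every part of the MQSD norm of \<open>\<tau> c\<^sub>L b z\<close> by a multiple of
  \<open>R\<close>. Hence \<open>a\<^sub>M\<^sub>Q(u, v) \<gtrsim> \<parallel>u\<parallel>\<^sup>2\<close> and \<open>\<parallel>v\<parallel> \<lesssim> \<parallel>u\<parallel>\<close> for the test function \<open>v\<close>, with constants independent
  of \<open>h\<close> and \<open>\<epsilon>\<close>.\<close>

section \<open>Inverse estimate for polynomials\<close>

lemma lagrange_basis_exists:
  fixes p :: nat and x :: "nat \<Rightarrow> real"
  assumes inj: "inj_on x {..p}"
  shows "\<exists>l. \<forall>i\<le>p. degree (l i) \<le> p \<and> (\<forall>k\<le>p. poly (l i) (x k) = (if k = i then 1 else 0))"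
proof -
  define l where "l i = smult (inverse (\<Prod>j\<in>{..p}-{i}. x i - x j)) (\<Prod>j\<in>{..p}-{i}. [:- x j, 1:])" for i
  have "degree (l i) \<le> p" if "i \<le> p" for i
  proof -
    have "degree (l i) \<le> degree (\<Prod>j\<in>{..p}-{i}. [:- x j, 1:])"
      unfolding l_def by (rule degree_smult_le)
    also have "\<dots> \<le> (\<Sum>j\<in>{..p}-{i}. degree [:- x j, 1:])"
      using degree_prod_sum_le[of "{..p}-{i}" "\<lambda>j. [:- x j, 1:]"] by (simp add: o_def)
    also have "\<dots> = card ({..p}-{i})" by simp
    also have "\<dots> = p" using that by simp
    finally show ?thesis .
  qed
  moreover have "poly (l i) (x k) = (if k = i then 1 else 0)" if "i \<le> p" "k \<le> p" for i k
  proof (cases "k = i")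
    case True
    have "(\<Prod>j\<in>{..p}-{i}. x i - x j) \<noteq> 0"
      using inj that by (auto simp: inj_on_def)
    then show ?thesis using True by (simp add: l_def poly_prod)
  next
    case False
    have "(\<Prod>j\<in>{..p}-{i}. poly [:- x j, 1:] (x k)) = 0"
      using False that by (intro prod_zero) auto
    then show ?thesis using False by (simp add: l_def poly_prod)
  qed
  ultimately show ?thesis by blast
qed

lemma poly_eq_sum_lagrange_basis:
  fixes p :: nat and x :: "nat \<Rightarrow> real" and Q :: "real poly"
  assumes inj: "inj_on x {..p}"
    and l: "\<forall>i\<le>p. degree (l i) \<le> p \<and> (\<forall>k\<le>p. poly (l i) (x k) = (if k = i then 1 else 0))"
    and dQ: "degree Q \<le> p"
  shows "Q = (\<Sum>i\<le>p. smult (poly Q (x i)) (l i))"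
proof (rule poly_eqI_degree[where A = "x ` {..p}"])
  fix y assume "y \<in> x ` {..p}"
  then obtain k where k: "k \<le> p" "y = x k" by auto
  have "poly (\<Sum>i\<le>p. smult (poly Q (x i)) (l i)) y = (\<Sum>i\<le>p. poly Q (x i) * poly (l i) (x k))"
    by (simp add: poly_sum k)
  also have "\<dots> = (\<Sum>i\<le>p. if i = k then poly Q (x k) else 0)"
    using l k by (intro sum.cong) auto
  also have "\<dots> = poly Q (x k)" using k by simp
  finally show "poly Q y = poly (\<Sum>i\<le>p. smult (poly Q (x i)) (l i)) y" using k by simp
next
  have c: "card (x ` {..p}) = Suc p" using inj by (simp add: card_image)
  show "degree Q < card (x ` {..p})" using c dQ by simp
  have "degree (\<Sum>i\<le>p. smult (poly Q (x i)) (l i)) \<le> p"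
    by (rule degree_sum_le) (use l in \<open>auto intro: order.trans[OF degree_smult_le]\<close>)
  then show "degree (\<Sum>i\<le>p. smult (poly Q (x i)) (l i)) < card (x ` {..p})" using c by simp
qed

lemma poly_deriv_bound_unit_interval:
  fixes p :: nat
  shows "\<exists>K\<ge>1. \<forall>(Q::real poly) m. degree Q \<le> p \<longrightarrow>
     (\<forall>i\<le>p. \<bar>poly Q (real i / real (Suc p))\<bar> \<le> m) \<longrightarrow>
     (\<forall>t\<in>{0..1}. \<bar>poly (pderiv Q) t\<bar> \<le> K * m)"
proof -
  define x where "x i = real i / real (Suc p)" for i
  have inj: "inj_on x {..p}" by (auto simp: inj_on_def x_def)
  obtain l where l: "\<forall>i\<le>p. degree (l i) \<le> p \<and> (\<forall>k\<le>p. poly (l i) (x k) = (if k = i then 1 else 0))"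
    using lagrange_basis_exists[OF inj] by blast
  have "\<exists>B. \<forall>t\<in>{0..1::real}. \<bar>poly (pderiv (l i)) t\<bar> \<le> B" for i
  proof -
    have "compact ((\<lambda>t. poly (pderiv (l i)) t) ` {0..1::real})"
      by (intro compact_continuous_image continuous_intros) auto
    then have "bounded ((\<lambda>t. poly (pderiv (l i)) t) ` {0..1::real})" by (rule compact_imp_bounded)
    then show ?thesis by (auto simp: bounded_real)
  qed
  then obtain B where B: "\<And>i t. t \<in> {0..1::real} \<Longrightarrow> \<bar>poly (pderiv (l i)) t\<bar> \<le> B i" by metis
  define K where "K = 1 + (\<Sum>i\<le>p. \<bar>B i\<bar>)"
  have K1: "K \<ge> 1" by (simp add: K_def sum_nonneg)
  have "\<bar>poly (pderiv Q) t\<bar> \<le> K * m"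
    if dQ: "degree Q \<le> p" and m: "\<forall>i\<le>p. \<bar>poly Q (x i)\<bar> \<le> m" and t: "t \<in> {0..1}" for Q m t
  proof -
    have m0: "m \<ge> 0" using m by (meson abs_ge_zero order.trans atMost_iff le0)
    have "pderiv Q = (\<Sum>i\<le>p. smult (poly Q (x i)) (pderiv (l i)))"
      by (subst poly_eq_sum_lagrange_basis[OF inj l dQ]) (simp add: higher_pderiv_sum[of 1, simplified] pderiv_smult)
    then have "poly (pderiv Q) t = (\<Sum>i\<le>p. poly Q (x i) * poly (pderiv (l i)) t)"
      by (simp add: poly_sum)
    then have "\<bar>poly (pderiv Q) t\<bar> \<le> (\<Sum>i\<le>p. \<bar>poly Q (x i) * poly (pderiv (l i)) t\<bar>)"
      by (simp add: sum_abs)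
    also have "\<dots> \<le> (\<Sum>i\<le>p. m * \<bar>B i\<bar>)"
    proof (rule sum_mono)
      fix i assume i: "i \<in> {..p}"
      have "\<bar>poly Q (x i) * poly (pderiv (l i)) t\<bar> = \<bar>poly Q (x i)\<bar> * \<bar>poly (pderiv (l i)) t\<bar>"
        by (simp add: abs_mult)
      also have "\<dots> \<le> m * \<bar>B i\<bar>"
        using m i B[OF t, of i] by (intro mult_mono) auto
      finally show "\<bar>poly Q (x i) * poly (pderiv (l i)) t\<bar> \<le> m * \<bar>B i\<bar>" .
    qed
    also have "\<dots> = m * (\<Sum>i\<le>p. \<bar>B i\<bar>)" by (simp add: sum_distrib_left)
    also have "\<dots> \<le> K * m" using m0 by (simp add: K_def algebra_simps)
    finally show ?thesis .
  qed
  then show ?thesis using K1 unfolding x_def by blast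
qed

lemma poly_deriv_bound_interval:
  fixes p :: nat
  obtains K :: real where "K \<ge> 1" and "\<And>Q \<alpha> h m. h > 0 \<Longrightarrow> degree Q \<le> p \<Longrightarrow>
      (\<forall>y\<in>{\<alpha>..\<alpha>+h}. \<bar>poly Q y\<bar> \<le> m) \<Longrightarrow> (\<forall>y\<in>{\<alpha>..\<alpha>+h}. \<bar>poly (pderiv Q) y\<bar> \<le> K * m / h)"
proof -
  obtain K where K1: "K \<ge> 1" and K: "\<forall>(Q::real poly) m. degree Q \<le> p \<longrightarrow>
     (\<forall>i\<le>p. \<bar>poly Q (real i / real (Suc p))\<bar> \<le> m) \<longrightarrow>
     (\<forall>t\<in>{0..1}. \<bar>poly (pderiv Q) t\<bar> \<le> K * m)"
    using poly_deriv_bound_unit_interval[of p] by blast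
  have "\<forall>y\<in>{\<alpha>..\<alpha>+h}. \<bar>poly (pderiv Q) y\<bar> \<le> K * m / h"
    if h: "h > 0" and dQ: "degree Q \<le> p" and m: "\<forall>y\<in>{\<alpha>..\<alpha>+h}. \<bar>poly Q y\<bar> \<le> m" for Q \<alpha> h m
  proof
    fix y assume y: "y \<in> {\<alpha>..\<alpha>+h}"
    define R where "R = pcompose Q [:\<alpha>, h:]"
    have d1: "degree [:\<alpha>, h:] \<le> 1" by (rule order.trans[OF degree_pCons_le]) simp
    have dR: "degree R \<le> p"
      using degree_pcompose_le[of Q "[:\<alpha>, h:]"] dQ d1 unfolding R_def
      by (metis (no_types) le_trans mult.right_neutral mult_le_mono2)
    have pR: "poly R s = poly Q (\<alpha> + h * s)" for s
      by (simp add: R_def poly_pcompose algebra_simps)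
    have pdR: "poly (pderiv R) s = poly (pderiv Q) (\<alpha> + h * s) * h" for s
      by (simp add: R_def pderiv_pcompose poly_pcompose pderiv_pCons algebra_simps)
    have nodes: "\<forall>i\<le>p. \<bar>poly R (real i / real (Suc p))\<bar> \<le> m"
    proof (intro allI impI)
      fix i assume "i \<le> p"
      then have "real i / real (Suc p) \<le> 1" "0 \<le> real i / real (Suc p)" by auto
      then have "h * (real i / real (Suc p)) \<le> h" "0 \<le> h * (real i / real (Suc p))"
        using h mult_left_mono[of "real i / real (Suc p)" 1 h] by auto
      then have "\<alpha> + h * (real i / real (Suc p)) \<in> {\<alpha>..\<alpha>+h}" by auto
      then show "\<bar>poly R (real i / real (Suc p))\<bar> \<le> m" using m by (simp add: pR)
    qed
    define s where "s = (y - \<alpha>) / h"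
    have s01: "s \<in> {0..1}" using y h by (auto simp: s_def field_simps)
    have ys: "\<alpha> + h * s = y" using h by (simp add: s_def field_simps)
    have "\<bar>poly (pderiv R) s\<bar> \<le> K * m" using K dR nodes s01 by blast
    then have "\<bar>poly (pderiv Q) y\<bar> * h \<le> K * m" using h by (simp add: pdR ys abs_mult)
    then show "\<bar>poly (pderiv Q) y\<bar> \<le> K * m / h" using h by (simp add: field_simps)
  qed
  then show ?thesis using that K1 by blast
qed

lemma poly_sq_integral_ge_near_max:
  fixes Q :: "real poly"
  assumes h: "h > 0" and K: "K \<ge> 1" and t0: "t0 \<in> {\<alpha>..\<alpha>+h}"
    and dQ: "\<forall>y\<in>{\<alpha>..\<alpha>+h}. \<bar>poly (pderiv Q) y\<bar> \<le> K * \<bar>poly Q t0\<bar> / h"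
  shows "h / (2 * K) * ((poly Q t0)\<^sup>2 / 4) \<le> integral {\<alpha>..\<alpha>+h} (\<lambda>y. (poly Q y)\<^sup>2)"
proof -
  define m where "m = \<bar>poly Q t0\<bar>"
  define \<delta> where "\<delta> = h / (2 * K)"
  have \<delta>0: "\<delta> > 0" and \<delta>h: "\<delta> \<le> h / 2" using h K by (auto simp: \<delta>_def field_simps)
  obtain c where J: "{c..c+\<delta>} \<subseteq> {\<alpha>..\<alpha>+h}" and t0J: "t0 \<in> {c..c+\<delta>}"
  proof (cases "t0 \<le> \<alpha> + h / 2")
    case True
    show ?thesis by (rule that[of t0]) (use True t0 \<delta>h \<delta>0 in auto)
  next
    case False
    show ?thesis by (rule that[of "t0 - \<delta>"]) (use False t0 \<delta>h \<delta>0 in auto)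
  qed
  have near: "m\<^sup>2 / 4 \<le> (poly Q y)\<^sup>2" if y: "y \<in> {c..c+\<delta>}" for y
  proof -
    have "\<bar>poly Q y - poly Q t0\<bar> \<le> K * m / h * \<bar>y - t0\<bar>"
      using field_differentiable_bound[of "{\<alpha>..\<alpha>+h}" "poly Q" "poly (pderiv Q)" "K * m / h" y t0]
        dQ t0 y J by (auto simp: m_def has_field_derivative_at_within)
    also have "\<dots> \<le> K * m / h * \<delta>"
      using y t0J h K by (intro mult_left_mono) (auto simp: m_def)
    also have "\<dots> = m / 2" using h K by (simp add: \<delta>_def field_simps)
    finally have "m / 2 \<le> \<bar>poly Q y\<bar>" unfolding m_def by linarith
    then have "(m / 2)\<^sup>2 \<le> (poly Q y)\<^sup>2" using power_mono[of "m / 2" "\<bar>poly Q y\<bar>" 2] by (simp add: m_def)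
    then show ?thesis by (simp add: power_divide)
  qed
  have int: "(\<lambda>y. (poly Q y)\<^sup>2) integrable_on {c..d}" for c d
    by (intro integrable_continuous_interval continuous_intros)
  have "\<delta> * (m\<^sup>2 / 4) = integral {c..c+\<delta>} (\<lambda>y. m\<^sup>2 / 4)" using \<delta>0 by simp
  also have "\<dots> \<le> integral {c..c+\<delta>} (\<lambda>y. (poly Q y)\<^sup>2)"
    by (rule integral_le[OF _ int]) (use near in auto)
  also have "\<dots> \<le> integral {\<alpha>..\<alpha>+h} (\<lambda>y. (poly Q y)\<^sup>2)"
    by (rule integral_subset_le[OF J int int]) auto
  finally show ?thesis by (simp add: \<delta>_def m_def)
qed

text \<open>With \<open>m = max |Q|\<close> on the cell, the Markov-type bound gives \<open>\<integral> Q'\<^sup>2 \<le> h (K m / h)\<^sup>2\<close>, while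
  \<open>|Q| \<ge> m/2\<close> on a subinterval of length \<open>h/(2K)\<close> gives \<open>\<integral> Q\<^sup>2 \<ge> h m\<^sup>2 / (8 K)\<close>.\<close>

lemma poly_inverse_estimate:
  fixes p :: nat
  obtains K :: real where "K > 0" and "\<And>Q \<alpha> h. h > 0 \<Longrightarrow> degree Q \<le> p \<Longrightarrow>
      integral {\<alpha>..\<alpha>+h} (\<lambda>y. (poly (pderiv Q) y)\<^sup>2) \<le> K / h\<^sup>2 * integral {\<alpha>..\<alpha>+h} (\<lambda>y. (poly Q y)\<^sup>2)"
proof -
  obtain K0 :: real where K01: "K0 \<ge> 1" and K0: "\<And>Q \<alpha> h m. h > 0 \<Longrightarrow> degree Q \<le> p \<Longrightarrow>
      (\<forall>y\<in>{\<alpha>..\<alpha>+h}. \<bar>poly Q y\<bar> \<le> m) \<Longrightarrow> (\<forall>y\<in>{\<alpha>..\<alpha>+h}. \<bar>poly (pderiv Q) y\<bar> \<le> K0 * m / h)"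
    using poly_deriv_bound_interval by blast
  have "integral {\<alpha>..\<alpha>+h} (\<lambda>y. (poly (pderiv Q) y)\<^sup>2) \<le> (8 * K0^3) / h\<^sup>2 * integral {\<alpha>..\<alpha>+h} (\<lambda>y. (poly Q y)\<^sup>2)"
    if h: "h > 0" and dQ: "degree Q \<le> p" for Q \<alpha> h
  proof -
    have "\<exists>t\<in>{\<alpha>..\<alpha>+h}. \<forall>y\<in>{\<alpha>..\<alpha>+h}. \<bar>poly Q y\<bar> \<le> \<bar>poly Q t\<bar>"
      using h by (intro continuous_attains_sup) (auto intro!: continuous_intros)
    then obtain t0 where t0: "t0 \<in> {\<alpha>..\<alpha>+h}" and mx: "\<forall>y\<in>{\<alpha>..\<alpha>+h}. \<bar>poly Q y\<bar> \<le> \<bar>poly Q t0\<bar>"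
      by blast
    define m where "m = \<bar>poly Q t0\<bar>"
    have dB: "\<forall>y\<in>{\<alpha>..\<alpha>+h}. \<bar>poly (pderiv Q) y\<bar> \<le> K0 * m / h"
      using K0[OF h dQ, of \<alpha> m] mx by (simp add: m_def)
    have "integral {\<alpha>..\<alpha>+h} (\<lambda>y. (poly (pderiv Q) y)\<^sup>2) \<le> integral {\<alpha>..\<alpha>+h} (\<lambda>y. (K0 * m / h)\<^sup>2)"
    proof (rule integral_le)
      fix y assume "y \<in> {\<alpha>..\<alpha>+h}"
      then have "\<bar>poly (pderiv Q) y\<bar> \<le> K0 * m / h" using dB by blast
      then show "(poly (pderiv Q) y)\<^sup>2 \<le> (K0 * m / h)\<^sup>2"
        using power_mono[OF _ abs_ge_zero, of _ _ 2] by fastforce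
    qed (auto intro!: integrable_continuous_interval continuous_intros)
    also have "\<dots> = (8 * K0^3) / h\<^sup>2 * (h / (2 * K0) * (m\<^sup>2 / 4))"
      using h K01 by (simp add: power2_eq_square power3_eq_cube divide_simps)
    also have "\<dots> \<le> (8 * K0^3) / h\<^sup>2 * integral {\<alpha>..\<alpha>+h} (\<lambda>y. (poly Q y)\<^sup>2)"
      using poly_sq_integral_ge_near_max[OF h K01 t0] dB K01 by (intro mult_left_mono) (auto simp: m_def)
    finally show ?thesis .
  qed
  moreover have "8 * K0^3 > 0" using K01 by simp
  ultimately show ?thesis using that by blast
qed

section \<open>Uniform meshes and splines\<close>

abbreviation cell :: "real \<Rightarrow> real \<Rightarrow> nat \<Rightarrow> nat \<Rightarrow> real set" where
  "cell a0 b0 n j \<equiv> {knot a0 b0 n j..knot a0 b0 n (Suc j)}"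

lemma knot_0 [simp]: "knot a0 b0 n 0 = a0"
  by (simp add: knot_def)

lemma knot_N: "n \<ge> 1 \<Longrightarrow> knot a0 b0 n n = b0"
  by (simp add: knot_def)

lemma knot_Suc: "knot a0 b0 n (Suc j) = knot a0 b0 n j + (b0 - a0) / n"
  by (cases "n = 0") (simp_all add: knot_def field_simps)

lemma knot_mono:
  assumes "a0 < b0" "n \<ge> 1" "i \<le> j"
  shows "knot a0 b0 n i \<le> knot a0 b0 n j"
  using assms by (auto simp: knot_def intro!: divide_right_mono mult_right_mono)

lemma knot_strict_mono:
  assumes "a0 < b0" "n \<ge> 1" "i < j"
  shows "knot a0 b0 n i < knot a0 b0 n j"
  using assms by (auto simp: knot_def intro!: divide_strict_right_mono mult_strict_right_mono)

lemma knot_inj: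
  assumes "a0 < b0" "n \<ge> 1" "knot a0 b0 n i = knot a0 b0 n j"
  shows "i = j"
  using knot_strict_mono[OF assms(1,2), of i j] knot_strict_mono[OF assms(1,2), of j i] assms(3)
  by (cases i j rule: linorder_cases) auto

lemma knot_mult:
  assumes "d \<ge> 1"
  shows "knot a0 b0 (n * d) (i * d) = knot a0 b0 n i"
  using assms by (cases "n = 0") (auto simp: knot_def field_simps)

lemma cell_subset:
  assumes "a0 < b0" "n \<ge> 1" "j < n"
  shows "cell a0 b0 n j \<subseteq> {a0..b0}"
  using knot_mono[OF assms(1,2), of 0 j] knot_mono[OF assms(1,2), of "Suc j" n] assms(3)
  by (auto simp: knot_N[OF assms(2)])

lemma cell_exists:
  assumes ab: "a0 < b0" and n: "n \<ge> 1" and x: "x \<in> {a0..b0}"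
  shows "\<exists>j<n. x \<in> cell a0 b0 n j"
proof -
  define y where "y = (x - a0) * n / (b0 - a0)"
  have y0: "0 \<le> y" and yn: "y \<le> n" using ab x n by (auto simp: y_def field_simps)
  define k where "k = nat \<lfloor>y\<rfloor>"
  have k1: "real k \<le> y" and k2: "y < real k + 1" using y0 by (auto simp: k_def)
  define j where "j = min (n - 1) k"
  have jn: "j < n" using n by (simp add: j_def)
  have "real j \<le> y" using k1 by (simp add: j_def)
  moreover have "y \<le> real (Suc j)"
    using k2 yn n by (cases "k \<le> n - 1") (auto simp: j_def)
  ultimately have "real j * (b0 - a0) \<le> (x - a0) * n" "(x - a0) * n \<le> real (Suc j) * (b0 - a0)"
    using ab by (auto simp: y_def field_simps)
  then show ?thesis using jn ab n by (auto simp: knot_def field_simps)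
qed

lemma Union_cells:
  assumes "a0 < b0" "n \<ge> 1"
  shows "(\<Union>j\<in>{..<n}. cell a0 b0 n j) = {a0..b0}"
  using cell_subset[OF assms] cell_exists[OF assms] by blast

lemma cells_meet_at_knot:
  assumes ab: "a0 < b0" and n: "n \<ge> 1" and "i < j"
    and xi: "x \<in> cell a0 b0 n i" and xj: "x \<in> cell a0 b0 n j"
  shows "j = Suc i \<and> x = knot a0 b0 n j"
proof -
  have "knot a0 b0 n (Suc i) \<le> knot a0 b0 n j" using assms by (intro knot_mono) auto
  then have e: "x = knot a0 b0 n j" "knot a0 b0 n (Suc i) = knot a0 b0 n j" using xi xj by auto
  then show ?thesis using knot_inj[OF ab n e(2)] by simp
qed

lemma integral_sum_cells:
  fixes F :: "real \<Rightarrow> real"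
  assumes ab: "a0 < b0" and n: "n \<ge> 1" and F: "F integrable_on {a0..b0}"
  shows "integral {a0..b0} F = (\<Sum>j<n. integral (cell a0 b0 n j) F)"
proof -
  have "integral {a0..knot a0 b0 n m} F = (\<Sum>j<m. integral (cell a0 b0 n j) F)" if "m \<le> n" for m
    using that
  proof (induction m)
    case (Suc m)
    have kn: "a0 \<le> knot a0 b0 n m" "knot a0 b0 n m \<le> knot a0 b0 n (Suc m)" "knot a0 b0 n (Suc m) \<le> b0"
      using knot_mono[OF ab n, of 0 m] knot_mono[OF ab n, of m "Suc m"] knot_mono[OF ab n, of "Suc m" n] Suc.prems
      by (auto simp: knot_N[OF n])
    have "F integrable_on {a0..knot a0 b0 n (Suc m)}"
      by (rule integrable_on_subinterval[OF F]) (use kn in auto)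
    from Henstock_Kurzweil_Integration.integral_combine[OF kn(1) kn(2) this]
    have "integral {a0..knot a0 b0 n (Suc m)} F
        = integral {a0..knot a0 b0 n m} F + integral (cell a0 b0 n m) F" by simp
    then show ?case using Suc by simp
  qed simp
  from this[of n] show ?thesis by (simp add: knot_N[OF n])
qed

definition piecewise_poly :: "real \<Rightarrow> real \<Rightarrow> nat \<Rightarrow> nat \<Rightarrow> (real \<Rightarrow> real) \<Rightarrow> bool" where
  "piecewise_poly a0 b0 n p f \<longleftrightarrow>
     (\<exists>P. \<forall>j<n. degree (P j) \<le> p \<and> (\<forall>x\<in>cell a0 b0 n j. f x = poly (P j) x))"

definition C1_deriv_on :: "real \<Rightarrow> real \<Rightarrow> (real \<Rightarrow> real) \<Rightarrow> (real \<Rightarrow> real) \<Rightarrow> bool" where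
  "C1_deriv_on a0 b0 f g \<longleftrightarrow> continuous_on {a0..b0} f \<and> continuous_on {a0..b0} g \<and>
      (\<forall>x\<in>{a0<..<b0}. (f has_real_derivative g x) (at x))"

lemma C1_deriv_on_eq_pderiv:
  assumes C: "C1_deriv_on a0 b0 f g" and x: "x \<in> {\<alpha><..<\<beta>}" and sub: "{\<alpha>..\<beta>} \<subseteq> {a0..b0}"
    and eq: "\<forall>y\<in>{\<alpha>..\<beta>}. f y = poly P y"
  shows "g x = poly (pderiv P) x"
proof -
  have "x \<in> {a0<..<b0}" using x sub by (auto; force)
  then have "(f has_real_derivative g x) (at x)" using C by (auto simp: C1_deriv_on_def)
  then have "(poly P has_real_derivative g x) (at x)"
    by (rule has_field_derivative_transform_within_open[where S="{\<alpha><..<\<beta>}"]) (use x eq in auto)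
  then show ?thesis using poly_DERIV[of P x] DERIV_unique by blast
qed

lemma cell_inverse_estimate:
  assumes K: "\<And>Q \<alpha> h. h > 0 \<Longrightarrow> degree Q \<le> p \<Longrightarrow>
      integral {\<alpha>..\<alpha>+h} (\<lambda>y. (poly (pderiv Q) y)\<^sup>2) \<le> K / h\<^sup>2 * integral {\<alpha>..\<alpha>+h} (\<lambda>y. (poly Q y)\<^sup>2)"
    and ab: "a0 < b0" and n: "n \<ge> 1" and j: "j < n" and C: "C1_deriv_on a0 b0 f g"
    and P: "degree P \<le> p" "\<forall>x\<in>cell a0 b0 n j. f x = poly P x"
  shows "integral (cell a0 b0 n j) (\<lambda>x. (g x)\<^sup>2)
    \<le> K * (real n / (b0 - a0))\<^sup>2 * integral (cell a0 b0 n j) (\<lambda>x. (f x)\<^sup>2)"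
proof -
  define h where "h = (b0 - a0) / n"
  let ?\<alpha> = "knot a0 b0 n j"
  have h0: "h > 0" using ab n by (simp add: h_def)
  have ks: "knot a0 b0 n (Suc j) = ?\<alpha> + h" by (simp add: knot_Suc h_def)
  have sub: "{?\<alpha>..?\<alpha>+h} \<subseteq> {a0..b0}" using cell_subset[OF ab n j] ks by simp
  have eqf: "\<forall>y\<in>{?\<alpha>..?\<alpha>+h}. f y = poly P y" using P(2) ks by auto
  have "integral {?\<alpha>..?\<alpha>+h} (\<lambda>x. (g x)\<^sup>2) = integral {?\<alpha>..?\<alpha>+h} (\<lambda>x. (poly (pderiv P) x)\<^sup>2)"
  proof (rule integral_spike[where S="{?\<alpha>, ?\<alpha>+h}"])
    fix x assume "x \<in> {?\<alpha>..?\<alpha>+h} - {?\<alpha>, ?\<alpha>+h}"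
    then have "x \<in> {?\<alpha><..<?\<alpha>+h}" by auto
    from C1_deriv_on_eq_pderiv[OF C this sub eqf] show "(poly (pderiv P) x)\<^sup>2 = (g x)\<^sup>2" by simp
  qed auto
  also have "\<dots> \<le> K / h\<^sup>2 * integral {?\<alpha>..?\<alpha>+h} (\<lambda>y. (poly P y)\<^sup>2)"
    by (rule K[OF h0 P(1)])
  also have "integral {?\<alpha>..?\<alpha>+h} (\<lambda>y. (poly P y)\<^sup>2) = integral {?\<alpha>..?\<alpha>+h} (\<lambda>y. (f y)\<^sup>2)"
    by (rule integral_cong) (use eqf in auto)
  also have "K / h\<^sup>2 = K * (real n / (b0 - a0))\<^sup>2" by (simp add: h_def power_divide)
  finally show ?thesis by (simp add: ks)
qed

lemma piecewise_poly_inverse_estimate: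
  fixes p :: nat
  obtains K :: real where "K > 0" and "\<And>a0 b0 n f g. a0 < b0 \<Longrightarrow> n \<ge> 1 \<Longrightarrow>
      piecewise_poly a0 b0 n p f \<Longrightarrow> C1_deriv_on a0 b0 f g \<Longrightarrow>
      integral {a0..b0} (\<lambda>x. (g x)\<^sup>2) \<le> K * (real n / (b0 - a0))\<^sup>2 * integral {a0..b0} (\<lambda>x. (f x)\<^sup>2)"
proof -
  obtain K :: real where K0: "K > 0" and K: "\<And>Q \<alpha> h. h > 0 \<Longrightarrow> degree Q \<le> p \<Longrightarrow>
      integral {\<alpha>..\<alpha>+h} (\<lambda>y. (poly (pderiv Q) y)\<^sup>2) \<le> K / h\<^sup>2 * integral {\<alpha>..\<alpha>+h} (\<lambda>y. (poly Q y)\<^sup>2)"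
    using poly_inverse_estimate by blast
  have "integral {a0..b0} (\<lambda>x. (g x)\<^sup>2) \<le> K * (real n / (b0 - a0))\<^sup>2 * integral {a0..b0} (\<lambda>x. (f x)\<^sup>2)"
    if ab: "a0 < b0" and n: "n \<ge> 1" and f: "piecewise_poly a0 b0 n p f" and C: "C1_deriv_on a0 b0 f g"
    for a0 b0 n f g
  proof -
    obtain P where P: "\<And>j. j < n \<Longrightarrow> degree (P j) \<le> p"
      "\<And>j. j < n \<Longrightarrow> \<forall>x\<in>cell a0 b0 n j. f x = poly (P j) x"
      using f unfolding piecewise_poly_def by blast
    have cf: "continuous_on {a0..b0} f" and cg: "continuous_on {a0..b0} g"
      using C by (auto simp: C1_deriv_on_def)
    have "integral {a0..b0} (\<lambda>x. (g x)\<^sup>2) = (\<Sum>j<n. integral (cell a0 b0 n j) (\<lambda>x. (g x)\<^sup>2))"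
      by (rule integral_sum_cells[OF ab n]) (intro integrable_continuous_interval continuous_intros cg)
    also have "\<dots> \<le> (\<Sum>j<n. K * (real n / (b0 - a0))\<^sup>2 * integral (cell a0 b0 n j) (\<lambda>x. (f x)\<^sup>2))"
      by (rule sum_mono) (use cell_inverse_estimate[OF K ab n _ C P(1) P(2)] in auto)
    also have "\<dots> = K * (real n / (b0 - a0))\<^sup>2 * integral {a0..b0} (\<lambda>x. (f x)\<^sup>2)"
      by (simp add: integral_sum_cells[OF ab n] integrable_continuous_interval continuous_intros cf
          sum_distrib_left)
    finally show ?thesis .
  qed
  then show ?thesis using that K0 by blast
qed

lemma spline_pieces_agree:
  assumes ab: "a0 < b0" and n: "n \<ge> 1"
    and M: "\<forall>j. 0 < j \<and> j < n \<longrightarrow> (\<forall>k<q. poly ((pderiv ^^ k) (P (j - 1))) (knot a0 b0 n j)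
                   = poly ((pderiv ^^ k) (P j)) (knot a0 b0 n j))"
    and ij: "i < n" "j < n" and k: "k < q"
    and xi: "x \<in> cell a0 b0 n i" and xj: "x \<in> cell a0 b0 n j"
  shows "poly ((pderiv ^^ k) (P i)) x = poly ((pderiv ^^ k) (P j)) x"
proof (cases i j rule: linorder_cases)
  case less
  from cells_meet_at_knot[OF ab n less xi xj] have "j = Suc i" "x = knot a0 b0 n j" by auto
  then show ?thesis using M ij k by auto
next
  case greater
  from cells_meet_at_knot[OF ab n greater xj xi] have "i = Suc j" "x = knot a0 b0 n i" by auto
  then show ?thesis using M ij k by (metis diff_Suc_1 zero_less_Suc)
qed simp

lemma continuous_on_cellwise_poly:
  assumes "a0 < b0" "n \<ge> 1" and f: "\<And>j x. j < n \<Longrightarrow> x \<in> cell a0 b0 n j \<Longrightarrow> f x = poly (P j) x"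
  shows "continuous_on {a0..b0} f"
proof -
  have "continuous_on (\<Union>j\<in>{..<n}. cell a0 b0 n j) f"
  proof (rule continuous_on_closed_Union)
    fix j assume "j \<in> {..<n}"
    show "continuous_on (cell a0 b0 n j) f"
      by (rule continuous_on_eq[of _ "poly (P j)"]) (use f[of j] \<open>j \<in> {..<n}\<close> in \<open>auto intro: continuous_on_poly\<close>)
  qed auto
  then show ?thesis using Union_cells[OF assms(1,2)] by simp
qed

lemma has_real_derivative_left_right:
  fixes f :: "real \<Rightarrow> real"
  assumes "(f has_real_derivative D) (at x within {..x})" "(f has_real_derivative D) (at x within {x..})"
  shows "(f has_real_derivative D) (at x)"
proof -
  have "((\<lambda>y. (f y - f x) / (y - x)) \<longlongrightarrow> D) (at x within ({..x} \<union> {x..}))"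
    using assms by (simp add: has_field_derivative_iff Lim_within_Un)
  moreover have "{..x} \<union> {x..} = (UNIV :: real set)" by auto
  ultimately show ?thesis by (simp add: has_field_derivative_iff)
qed

lemma interior_knot_if_not_in_open_cell:
  assumes ab: "a0 < b0" and n: "n \<ge> 1" and x: "x \<in> {a0<..<b0}"
    and no_cell: "\<not> (\<exists>j<n. x \<in> {knot a0 b0 n j<..<knot a0 b0 n (Suc j)})"
  obtains i where "0 < i" "i < n" "x = knot a0 b0 n i"
proof -
  have "x \<in> {a0..b0}" using x by auto
  then obtain j where j: "j < n" "x \<in> cell a0 b0 n j" using cell_exists[OF ab n] by blast
  show ?thesis
  proof (cases "x = knot a0 b0 n j")
    case True
    then have "j \<noteq> 0" using x by (metis greaterThanLessThan_iff knot_0 less_irrefl)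
    then show ?thesis using True j that by blast
  next
    case False
    then have "x = knot a0 b0 n (Suc j)" using no_cell j by force
    moreover from this have "Suc j \<noteq> n" using x knot_N[OF n] by auto
    ultimately show ?thesis using j that[of "Suc j"] by simp
  qed
qed

text \<open>At an interior knot the two adjacent pieces give the one-sided derivatives; they agree
  because \<open>g\<close> is single-valued there.\<close>

lemma has_real_derivative_cellwise_poly:
  assumes ab: "a0 < b0" and n: "n \<ge> 1"
    and f: "\<And>j y. j < n \<Longrightarrow> y \<in> cell a0 b0 n j \<Longrightarrow> f y = poly (P j) y"
    and g: "\<And>j y. j < n \<Longrightarrow> y \<in> cell a0 b0 n j \<Longrightarrow> g y = poly (pderiv (P j)) y"
    and x: "x \<in> {a0<..<b0}"
  shows "(f has_real_derivative g x) (at x)"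
proof (cases "\<exists>j<n. x \<in> {knot a0 b0 n j<..<knot a0 b0 n (Suc j)}")
  case True
  then obtain j where j: "j < n" "x \<in> {knot a0 b0 n j<..<knot a0 b0 n (Suc j)}" by blast
  have "(poly (P j) has_real_derivative g x) (at x)" using g[of j x] j by auto
  then show ?thesis
    by (rule has_field_derivative_transform_within_open[where S="{knot a0 b0 n j<..<knot a0 b0 n (Suc j)}"])
       (use j f[of j] in auto)
next
  case False
  then obtain i where i: "0 < i" "i < n" "x = knot a0 b0 n i"
    using interior_knot_if_not_in_open_cell[OF ab n x] by blast
  have xl: "x \<in> cell a0 b0 n (i - 1)" and xr: "x \<in> cell a0 b0 n i"
    using i knot_mono[OF ab n, of "i - 1" i] knot_mono[OF ab n, of i "Suc i"] by auto
  have dl: "knot a0 b0 n (i - 1) < x" using knot_strict_mono[OF ab n, of "i - 1" i] i by auto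
  have dr: "x < knot a0 b0 n (Suc i)" using knot_strict_mono[OF ab n, of i "Suc i"] i by auto
  have "(poly (P (i - 1)) has_real_derivative g x) (at x within {..x})"
    using g[of "i - 1" x] i xl by (auto intro: has_field_derivative_at_within)
  then have L: "(f has_real_derivative g x) (at x within {..x})"
  proof (rule has_field_derivative_transform_within[where d = "x - knot a0 b0 n (i - 1)"])
    fix y assume "y \<in> {..x}" "dist y x < x - knot a0 b0 n (i - 1)"
    then have "y \<in> cell a0 b0 n (i - 1)" using i xl by (auto simp: dist_real_def)
    then show "poly (P (i - 1)) y = f y" using f[of "i - 1" y] i by simp
  qed (use dl in auto)
  have "(poly (P i) has_real_derivative g x) (at x within {x..})"
    using g[of i x] i xr by (auto intro: has_field_derivative_at_within)
  then have R: "(f has_real_derivative g x) (at x within {x..})"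
  proof (rule has_field_derivative_transform_within[where d = "knot a0 b0 n (Suc i) - x"])
    fix y assume "y \<in> {x..}" "dist y x < knot a0 b0 n (Suc i) - x"
    then have "y \<in> cell a0 b0 n i" using i by (auto simp: dist_real_def)
    then show "poly (P i) y = f y" using f[of i y] i by simp
  qed (use dr in auto)
  show ?thesis by (rule has_real_derivative_left_right[OF L R])
qed

lemma spline_C1_deriv:
  assumes ab: "a0 < b0" and n: "n \<ge> 1" and q: "q \<ge> 2" and f: "f \<in> spline_space a0 b0 n q"
  obtains g where "C1_deriv_on a0 b0 f g" and "g \<in> spline_space a0 b0 n (q - 1)"
proof -
  obtain P where P1: "\<And>j. j < n \<Longrightarrow> degree (P j) \<le> q"
    and P2: "\<And>j x. j < n \<Longrightarrow> x \<in> cell a0 b0 n j \<Longrightarrow> f x = poly (P j) x"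
    and M: "\<forall>j. 0 < j \<and> j < n \<longrightarrow> (\<forall>k<q. poly ((pderiv ^^ k) (P (j - 1))) (knot a0 b0 n j)
                   = poly ((pderiv ^^ k) (P j)) (knot a0 b0 n j))"
    using f unfolding spline_space_def by blast
  define g where "g x = poly (pderiv (P (SOME j. j < n \<and> x \<in> cell a0 b0 n j))) x" for x
  have gcell: "g x = poly (pderiv (P j)) x" if j: "j < n" "x \<in> cell a0 b0 n j" for j x
  proof -
    define j' where "j' = (SOME j. j < n \<and> x \<in> cell a0 b0 n j)"
    have j': "j' < n" "x \<in> cell a0 b0 n j'"
      using someI_ex[of "\<lambda>j. j < n \<and> x \<in> cell a0 b0 n j"] j unfolding j'_def by blast+
    have "poly ((pderiv ^^ 1) (P j')) x = poly ((pderiv ^^ 1) (P j)) x"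
      by (rule spline_pieces_agree[OF ab n M j'(1) j(1) _ j'(2) j(2)]) (use q in auto)
    then show ?thesis by (simp add: g_def j'_def)
  qed
  have "C1_deriv_on a0 b0 f g"
    unfolding C1_deriv_on_def
  proof (intro conjI ballI)
    show "continuous_on {a0..b0} f" by (rule continuous_on_cellwise_poly[OF ab n, of f P]) (rule P2)
    show "continuous_on {a0..b0} g"
      by (rule continuous_on_cellwise_poly[OF ab n, of g "\<lambda>j. pderiv (P j)"]) (rule gcell)
    show "(f has_real_derivative g x) (at x)" if "x \<in> {a0<..<b0}" for x
      by (rule has_real_derivative_cellwise_poly[OF ab n, of f P g]) (use P2 gcell that in auto)
  qed
  moreover have "g \<in> spline_space a0 b0 n (q - 1)"
    unfolding spline_space_def
  proof (intro CollectI exI[of _ "\<lambda>j. pderiv (P j)"] conjI allI impI ballI)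
    fix j assume "j < n"
    then show "degree (pderiv (P j)) \<le> q - 1" using P1 by (simp add: degree_pderiv diff_le_mono)
  next
    fix j k assume j: "0 < j \<and> j < n" and k: "k < q - 1"
    have "poly ((pderiv ^^ Suc k) (P (j - 1))) (knot a0 b0 n j) = poly ((pderiv ^^ Suc k) (P j)) (knot a0 b0 n j)"
      using M j k by (simp del: funpow.simps)
    then show "poly ((pderiv ^^ k) (pderiv (P (j - 1)))) (knot a0 b0 n j) = poly ((pderiv ^^ k) (pderiv (P j))) (knot a0 b0 n j)"
      by (simp add: funpow_Suc_right del: funpow.simps)
  qed (rule gcell)
  ultimately show ?thesis by (rule that)
qed

lemma spline_space_add_scaled:
  assumes f: "f \<in> spline_space a0 b0 n q" and g: "g \<in> spline_space a0 b0 n q"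
  shows "(\<lambda>y. f y + s * g y) \<in> spline_space a0 b0 n q"
proof -
  obtain P where P: "\<forall>j<n. degree (P j) \<le> q \<and> (\<forall>x\<in>cell a0 b0 n j. f x = poly (P j) x)"
    "\<forall>j. 0 < j \<and> j < n \<longrightarrow> (\<forall>k<q. poly ((pderiv ^^ k) (P (j - 1))) (knot a0 b0 n j)
                   = poly ((pderiv ^^ k) (P j)) (knot a0 b0 n j))"
    using f unfolding spline_space_def mem_Collect_eq by blast
  obtain R where R: "\<forall>j<n. degree (R j) \<le> q \<and> (\<forall>x\<in>cell a0 b0 n j. g x = poly (R j) x)"
    "\<forall>j. 0 < j \<and> j < n \<longrightarrow> (\<forall>k<q. poly ((pderiv ^^ k) (R (j - 1))) (knot a0 b0 n j)
                   = poly ((pderiv ^^ k) (R j)) (knot a0 b0 n j))"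
    using g unfolding spline_space_def mem_Collect_eq by blast
  show ?thesis unfolding spline_space_def mem_Collect_eq
  proof (intro exI[of _ "\<lambda>j. P j + smult s (R j)"] conjI allI impI ballI)
    fix j assume j: "j < n"
    have "degree (P j + smult s (R j)) \<le> max (degree (P j)) (degree (smult s (R j)))"
      by (rule degree_add_le_max)
    also have "\<dots> \<le> q" using P(1) R(1) j degree_smult_le[of s "R j"] by auto
    finally show "degree (P j + smult s (R j)) \<le> q" .
  next
    fix j x assume "j < n" "x \<in> cell a0 b0 n j"
    then show "f x + s * g x = poly (P j + smult s (R j)) x" using P(1) R(1) by simp
  next
    fix j k assume "0 < j \<and> j < n" "k < q"
    then show "poly ((pderiv ^^ k) (P (j - 1) + smult s (R (j - 1)))) (knot a0 b0 n j) =
               poly ((pderiv ^^ k) (P j + smult s (R j))) (knot a0 b0 n j)"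
      using P(2) R(2) by (simp add: higher_pderiv_add higher_pderiv_smult)
  qed
qed

lemma spline_space_scale:
  assumes "g \<in> spline_space a0 b0 n q"
  shows "(\<lambda>y. s * g y) \<in> spline_space a0 b0 n q"
  using spline_space_add_scaled[OF assms assms, of "s - 1"] by (simp add: algebra_simps)

lemma Vh_add_scaled: "f \<in> Vh a0 b0 n p \<Longrightarrow> g \<in> Vh a0 b0 n p \<Longrightarrow> (\<lambda>y. f y + s * g y) \<in> Vh a0 b0 n p"
  by (auto simp: Vh_def intro: spline_space_add_scaled)

lemma Vh_scale: "g \<in> Vh a0 b0 n p \<Longrightarrow> (\<lambda>y. s * g y) \<in> Vh a0 b0 n p"
  by (auto simp: Vh_def intro: spline_space_scale)

lemma spline_piecewise_poly_refine:
  assumes ab: "a0 < b0" and n: "n \<ge> 1" and d: "d \<ge> 1" and f: "f \<in> spline_space a0 b0 n p"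
  shows "piecewise_poly a0 b0 (n * d) p f"
proof -
  obtain P where P: "\<forall>j<n. degree (P j) \<le> p \<and> (\<forall>x\<in>cell a0 b0 n j. f x = poly (P j) x)"
    using f unfolding spline_space_def mem_Collect_eq by blast
  have nd: "n * d \<ge> 1" using n d by simp
  show ?thesis unfolding piecewise_poly_def
  proof (intro exI[of _ "\<lambda>j. P (j div d)"] allI impI conjI ballI)
    fix j assume j: "j < n * d"
    have jd: "j div d < n" using j d by (simp add: div_less_iff_less_mult mult.commute)
    then show "degree (P (j div d)) \<le> p" using P by blast
    fix x assume x: "x \<in> cell a0 b0 (n * d) j"
    have l: "knot a0 b0 n (j div d) \<le> knot a0 b0 (n * d) j"
      using knot_mult[OF d, of a0 b0 n "j div d"] knot_mono[OF ab nd, of "j div d * d" j]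
      using div_mult_mod_eq[of j d] by simp
    have "Suc j \<le> Suc (j div d) * d"
      using div_mult_mod_eq[of j d] mod_less_divisor[of d j] d unfolding mult_Suc by linarith
    then have r: "knot a0 b0 (n * d) (Suc j) \<le> knot a0 b0 n (Suc (j div d))"
      using knot_mult[OF d, of a0 b0 n "Suc (j div d)"] knot_mono[OF ab nd, of "Suc j" "Suc (j div d) * d"]
      by simp
    show "f x = poly (P (j div d)) x" using P jd x l r by auto
  qed
qed

lemma bubble_in_Vh:
  assumes "p \<ge> 2"
  shows "(\<lambda>x. (x - a0) * (b0 - x)) \<in> Vh a0 b0 n p"
  unfolding Vh_def spline_space_def
proof (intro CollectI conjI exI[of _ "\<lambda>j. [:- a0, 1:] * [:b0, -1:]"] allI impI ballI)
  have "degree ([:- a0, 1:] * [:b0, -1:]) \<le> degree [:- a0, 1:] + degree [:b0, -1:]"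
    by (rule degree_mult_le)
  then show "degree ([:- a0, 1:] * [:b0, -1:]) \<le> p" using assms by simp
qed (auto simp: algebra_simps)

lemma bubble_nonzero_on:
  assumes "a0 < b0"
  shows "nonzero_on a0 b0 (\<lambda>x. (x - a0) * (b0 - x))"
  unfolding nonzero_on_def by (rule bexI[of _ "(a0 + b0) / 2"]) (use assms in auto)

lemma L2_on_continuous:
  assumes "continuous_on {a0..b0} f"
  shows "L2_on a0 b0 f"
  unfolding L2_on_def set_borel_measurable_def
proof
  show "(\<lambda>x. indicator {a0..b0} x *\<^sub>R f x) \<in> borel_measurable lborel"
    using borel_measurable_continuous_on_indicator[OF _ assms] by simp
  show "set_integrable lborel {a0..b0} (\<lambda>x. (f x)\<^sup>2)"
    by (intro borel_integrable_atLeastAtMost' continuous_intros assms)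
qed

lemma set_integral_eq_if_eq_on_interior:
  fixes F G :: "real \<Rightarrow> real"
  assumes F: "continuous_on {a..b} F" and eq: "\<forall>x\<in>{a<..<b}. G x = F x"
  shows "(LINT x:{a..b}|lborel. G x) = (LINT x:{a..b}|lborel. F x)"
  unfolding set_lebesgue_integral_def
proof (rule integral_discrete_difference[where X="{a,b}"])
  fix x assume "x \<notin> {a, b}"
  then show "indicator {a..b} x *\<^sub>R G x = indicator {a..b} x *\<^sub>R F x"
    using eq by (cases "x \<in> {a..b}") auto
qed auto

lemma ip_nonneg: "ip a0 b0 f f \<ge> 0"
  unfolding ip_def set_lebesgue_integral_def
  by (rule Bochner_Integration.integral_nonneg) (auto simp: indicator_def)

lemma ip_comm: "ip a0 b0 f g = ip a0 b0 g f"
  unfolding ip_def by (simp add: mult.commute)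

lemma ip_cong:
  assumes "\<And>x. x \<in> {a0..b0} \<Longrightarrow> f x = f' x" "\<And>x. x \<in> {a0..b0} \<Longrightarrow> g x = g' x"
  shows "ip a0 b0 f g = ip a0 b0 f' g'"
  unfolding ip_def by (rule set_lebesgue_integral_cong) (use assms in auto)

lemma ip_scale_right: "ip a0 b0 f (\<lambda>x. t * g x) = t * ip a0 b0 f g"
  unfolding ip_def by (simp add: algebra_simps)

lemma ip_eq_integral:
  fixes f g :: "real \<Rightarrow> real"
  assumes "continuous_on {a0..b0} f" "continuous_on {a0..b0} g"
  shows "ip a0 b0 f g = integral {a0..b0} (\<lambda>x. f x * g x)"
  unfolding ip_def
  by (rule set_borel_integral_eq_integral(2)) (intro borel_integrable_atLeastAtMost' continuous_intros assms)

lemma young_abs_mult: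
  fixes x y \<eta> :: real
  assumes "\<eta> > 0"
  shows "2 * \<bar>x * y\<bar> \<le> \<eta> * (x * x) + (y * y) / \<eta>"
proof -
  have "0 \<le> (\<eta> * \<bar>x\<bar> - \<bar>y\<bar>)\<^sup>2" by simp
  then have "2 * \<eta> * \<bar>x * y\<bar> \<le> \<eta> * (\<eta> * (x * x)) + y * y"
    by (simp add: power2_eq_square algebra_simps abs_mult)
  then show ?thesis using assms by (simp add: field_simps)
qed

lemma sq_le_mult_if_young:
  fixes X P Q :: real
  assumes P: "P \<ge> 0" and Q: "Q \<ge> 0" and young: "\<And>\<eta>. \<eta> > 0 \<Longrightarrow> 2 * \<bar>X\<bar> \<le> P / \<eta> + \<eta> * Q"
  shows "X\<^sup>2 \<le> P * Q"
proof (cases "P > 0 \<and> Q > 0")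
  case True
  define \<eta> where "\<eta> = sqrt P / sqrt Q"
  have "\<eta> > 0" using True by (simp add: \<eta>_def)
  then have "2 * \<bar>X\<bar> \<le> P / \<eta> + \<eta> * Q" by (rule young)
  also have "\<dots> = 2 * sqrt (P * Q)"
    using True by (simp add: \<eta>_def real_sqrt_mult field_simps)
  finally have "\<bar>X\<bar> \<le> sqrt (P * Q)" by simp
  from power_mono[OF this abs_ge_zero, of 2] show ?thesis using P Q by simp
next
  case False
  have "X = 0"
  proof (rule ccontr)
    assume "X \<noteq> 0"
    then have X: "\<bar>X\<bar> > 0" by simp
    show False
    proof (cases "P = 0")
      case True
      have "2 * \<bar>X\<bar> \<le> \<bar>X\<bar> / (Q + 1) * Q" using young[of "\<bar>X\<bar> / (Q + 1)"] X Q True by simp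
      also have "\<dots> < \<bar>X\<bar>" using X Q by (simp add: field_simps)
      finally show False using X by simp
    next
      case False
      then have "Q = 0" using \<open>\<not> (P > 0 \<and> Q > 0)\<close> P Q by simp
      have "2 * \<bar>X\<bar> \<le> P / ((P + 1) / \<bar>X\<bar>)" using young[of "(P + 1) / \<bar>X\<bar>"] X P \<open>Q = 0\<close> by simp
      also have "\<dots> < \<bar>X\<bar>" using X P by (simp add: field_simps)
      finally show False using X by simp
    qed
  qed
  then show ?thesis using P Q by simp
qed

lemma young_scaled:
  fixes \<mu> \<eta> X P Q :: real
  assumes "\<mu> > 0" "\<eta> > 0" "2 * \<bar>X\<bar> \<le> (\<eta> / \<mu>) * P + Q / (\<eta> / \<mu>)"
  shows "2 * \<bar>\<mu> * X\<bar> \<le> \<eta> * P + \<mu>\<^sup>2 * Q / \<eta>"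
proof -
  have "2 * \<bar>\<mu> * X\<bar> = \<mu> * (2 * \<bar>X\<bar>)" using assms by (simp add: abs_mult)
  also have "\<dots> \<le> \<mu> * ((\<eta> / \<mu>) * P + Q / (\<eta> / \<mu>))" using assms by (intro mult_left_mono) auto
  also have "\<dots> = \<eta> * P + \<mu>\<^sup>2 * Q / \<eta>" using assms by (simp add: field_simps power2_eq_square)
  finally show ?thesis .
qed

section \<open>Weighted \<open>L\<^sup>2\<close> products\<close>

definition wip :: "real \<Rightarrow> real \<Rightarrow> (real \<Rightarrow> real) \<Rightarrow> (real \<Rightarrow> real) \<Rightarrow> (real \<Rightarrow> real) \<Rightarrow> real" where
  "wip a0 b0 c f g = (LINT x:{a0..b0}|lborel. c x * f x * g x)"

lemma ip_eq_wip: "ip a0 b0 f g = wip a0 b0 (\<lambda>_. 1) f g"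
  by (simp add: ip_def wip_def)

locale bounded_weight =
  fixes a0 b0 :: real and c :: "real \<Rightarrow> real" and Mc :: real
  assumes weight_measurable: "c \<in> borel_measurable lborel"
    and weight_bounded: "AE x in lborel. x \<in> {a0..b0} \<longrightarrow> \<bar>c x\<bar> \<le> Mc"
    and weight_nonneg: "AE x in lborel. x \<in> {a0..b0} \<longrightarrow> c x \<ge> 0"
begin

lemma wip_integrable:
  fixes f g :: "real \<Rightarrow> real"
  assumes f: "continuous_on {a0..b0} f" and g: "continuous_on {a0..b0} g"
  shows "set_integrable lborel {a0..b0} (\<lambda>x. c x * f x * g x)"
proof (rule set_integrable_bound)
  show "set_integrable lborel {a0..b0} (\<lambda>x. \<bar>Mc\<bar> * (\<bar>f x\<bar> * \<bar>g x\<bar>))"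
    by (intro borel_integrable_atLeastAtMost' continuous_intros f g)
  have "(\<lambda>x. indicator {a0..b0} x *\<^sub>R (f x * g x)) \<in> borel_measurable lborel"
    using borel_measurable_continuous_on_indicator[of "{a0..b0}" "\<lambda>x. f x * g x"]
    by (simp add: continuous_on_mult f g)
  then have "(\<lambda>x. c x * (indicator {a0..b0} x *\<^sub>R (f x * g x))) \<in> borel_measurable lborel"
    using weight_measurable by measurable
  moreover have "(\<lambda>x. c x * (indicator {a0..b0} x *\<^sub>R (f x * g x)))
      = (\<lambda>x. indicator {a0..b0} x *\<^sub>R (c x * f x * g x))"
    by (auto simp: indicator_def)
  ultimately show "set_borel_measurable lborel {a0..b0} (\<lambda>x. c x * f x * g x)"
    unfolding set_borel_measurable_def by simp
  show "AE x in lborel. x \<in> {a0..b0} \<longrightarrow> norm (c x * f x * g x) \<le> norm (\<bar>Mc\<bar> * (\<bar>f x\<bar> * \<bar>g x\<bar>))"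
    using weight_bounded by eventually_elim (auto simp: abs_mult mult_right_mono mult.assoc)
qed

lemma wip_add_scaled:
  assumes f: "continuous_on {a0..b0} f" and g: "continuous_on {a0..b0} g" and h: "continuous_on {a0..b0} h"
  shows "wip a0 b0 c f (\<lambda>x. g x + s * h x) = wip a0 b0 c f g + s * wip a0 b0 c f h"
proof -
  have "wip a0 b0 c f (\<lambda>x. g x + s * h x) = (LINT x:{a0..b0}|lborel. c x * f x * g x + s * (c x * f x * h x))"
    unfolding wip_def by (simp add: algebra_simps)
  also have "\<dots> = wip a0 b0 c f g + s * wip a0 b0 c f h"
    unfolding wip_def using wip_integrable[OF f g] wip_integrable[OF f h] by simp
  finally show ?thesis .
qed

lemma wip_young:
  assumes f: "continuous_on {a0..b0} f" and g: "continuous_on {a0..b0} g" and \<eta>: "\<eta> > 0"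
  shows "2 * \<bar>wip a0 b0 c f g\<bar> \<le> \<eta> * wip a0 b0 c f f + wip a0 b0 c g g / \<eta>"
proof -
  define Y where "Y x = (\<eta> * (c x * f x * f x) + c x * g x * g x / \<eta>) / 2" for x
  have iY: "set_integrable lborel {a0..b0} Y"
    unfolding Y_def using wip_integrable[OF f f] wip_integrable[OF g g] by simp
  have pt: "\<bar>c x * f x * g x\<bar> \<le> Y x" if "c x \<ge> 0" for x
  proof -
    have "c x * (2 * \<bar>f x * g x\<bar>) \<le> c x * (\<eta> * (f x * f x) + (g x * g x) / \<eta>)"
      by (rule mult_left_mono[OF young_abs_mult[OF \<eta>] that])
    then show ?thesis using that by (simp add: Y_def abs_mult algebra_simps)
  qed
  have "\<bar>wip a0 b0 c f g\<bar> \<le> (LINT x:{a0..b0}|lborel. Y x)"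
    unfolding wip_def
  proof (rule abs_leI)
    show "(LINT x:{a0..b0}|lborel. c x * f x * g x) \<le> (LINT x:{a0..b0}|lborel. Y x)"
      by (rule set_integral_mono_AE[OF wip_integrable[OF f g] iY])
         (use weight_nonneg in \<open>eventually_elim, use pt in force\<close>)
    have "- (LINT x:{a0..b0}|lborel. c x * f x * g x) = (LINT x:{a0..b0}|lborel. - (c x * f x * g x))"
      by (simp add: set_integral_uminus[OF wip_integrable[OF f g]])
    also have "\<dots> \<le> (LINT x:{a0..b0}|lborel. Y x)"
      by (rule set_integral_mono_AE[OF _ iY])
         (use wip_integrable[OF f g] weight_nonneg in
           \<open>simp add: set_integrable_def, eventually_elim, use pt in force\<close>)
    finally show "- (LINT x:{a0..b0}|lborel. c x * f x * g x) \<le> (LINT x:{a0..b0}|lborel. Y x)" .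
  qed
  also have "(LINT x:{a0..b0}|lborel. Y x) = (\<eta> * wip a0 b0 c f f + wip a0 b0 c g g / \<eta>) / 2"
    unfolding Y_def wip_def using wip_integrable[OF f f] wip_integrable[OF g g] by simp
  finally show ?thesis by simp
qed

lemma wip_sq_add_scaled_le:
  assumes f: "continuous_on {a0..b0} f" and g: "continuous_on {a0..b0} g"
  shows "wip a0 b0 c (\<lambda>x. f x + s * g x) (\<lambda>x. f x + s * g x)
    \<le> 2 * wip a0 b0 c f f + 2 * s\<^sup>2 * wip a0 b0 c g g"
proof -
  have fg: "continuous_on {a0..b0} (\<lambda>x. f x + s * g x)" by (intro continuous_intros f g)
  have "wip a0 b0 c (\<lambda>x. f x + s * g x) (\<lambda>x. f x + s * g x)
      \<le> (LINT x:{a0..b0}|lborel. 2 * (c x * f x * f x) + 2 * s\<^sup>2 * (c x * g x * g x))"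
    unfolding wip_def
  proof (rule set_integral_mono_AE[OF wip_integrable[OF fg fg]])
    show "set_integrable lborel {a0..b0} (\<lambda>x. 2 * (c x * f x * f x) + 2 * s\<^sup>2 * (c x * g x * g x))"
      using wip_integrable[OF f f] wip_integrable[OF g g] by simp
    have pt: "c x * (f x + s * g x) * (f x + s * g x) \<le> 2 * (c x * f x * f x) + 2 * s\<^sup>2 * (c x * g x * g x)"
      if "c x \<ge> 0" for x
    proof -
      have "(f x + s * g x)\<^sup>2 \<le> 2 * (f x)\<^sup>2 + 2 * s\<^sup>2 * (g x)\<^sup>2"
        using zero_le_power2[of "f x - s * g x"] by (simp add: power2_eq_square algebra_simps)
      from mult_left_mono[OF this that] show ?thesis by (simp add: power2_eq_square algebra_simps)
    qed
    show "AE x\<in>{a0..b0} in lborel. c x * (f x + s * g x) * (f x + s * g x)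
        \<le> 2 * (c x * f x * f x) + 2 * s\<^sup>2 * (c x * g x * g x)"
      using weight_nonneg by eventually_elim (use pt in auto)
  qed
  also have "\<dots> = 2 * wip a0 b0 c f f + 2 * s\<^sup>2 * wip a0 b0 c g g"
    unfolding wip_def using wip_integrable[OF f f] wip_integrable[OF g g] by simp
  finally show ?thesis .
qed

lemma wip_le_ip:
  assumes f: "continuous_on {a0..b0} f"
  shows "wip a0 b0 c f f \<le> Mc * ip a0 b0 f f"
proof -
  have "wip a0 b0 c f f \<le> (LINT x:{a0..b0}|lborel. Mc * (f x * f x))" unfolding wip_def
  proof (rule set_integral_mono_AE[OF wip_integrable[OF f f]])
    show "set_integrable lborel {a0..b0} (\<lambda>x. Mc * (f x * f x))"
      by (intro borel_integrable_atLeastAtMost' continuous_intros f)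
    show "AE x\<in>{a0..b0} in lborel. c x * f x * f x \<le> Mc * (f x * f x)"
      using weight_bounded by eventually_elim (auto simp: mult.assoc intro: mult_right_mono)
  qed
  then show ?thesis unfolding ip_def by simp
qed

end

interpretation unit_weight: bounded_weight a0 b0 "\<lambda>_. 1" 1 for a0 b0 :: real
  by unfold_locales auto

lemma ip_add_scaled:
  assumes "continuous_on {a0..b0} f" "continuous_on {a0..b0} g" "continuous_on {a0..b0} h"
  shows "ip a0 b0 f (\<lambda>x. g x + s * h x) = ip a0 b0 f g + s * ip a0 b0 f h"
  unfolding ip_eq_wip by (rule unit_weight.wip_add_scaled[OF assms])

lemma ip_young:
  assumes "continuous_on {a0..b0} f" "continuous_on {a0..b0} g" "\<eta> > 0"
  shows "2 * \<bar>ip a0 b0 f g\<bar> \<le> \<eta> * ip a0 b0 f f + ip a0 b0 g g / \<eta>"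
  unfolding ip_eq_wip by (rule unit_weight.wip_young[OF assms])

lemma ip_sq_add_scaled_le:
  assumes "continuous_on {a0..b0} f" "continuous_on {a0..b0} g"
  shows "ip a0 b0 (\<lambda>x. f x + s * g x) (\<lambda>x. f x + s * g x) \<le> 2 * ip a0 b0 f f + 2 * s\<^sup>2 * ip a0 b0 g g"
  unfolding ip_eq_wip by (rule unit_weight.wip_sq_add_scaled_le[OF assms])

lemma (in bounded_weight) ip_le_wip:
  assumes f: "continuous_on {a0..b0} f" and \<sigma>: "AE x in lborel. x \<in> {a0..b0} \<longrightarrow> c x \<ge> \<sigma>0"
  shows "\<sigma>0 * ip a0 b0 f f \<le> wip a0 b0 c f f"
proof -
  have "\<sigma>0 * ip a0 b0 f f = (LINT x:{a0..b0}|lborel. \<sigma>0 * (f x * f x))" unfolding ip_def by simp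
  also have "\<dots> \<le> wip a0 b0 c f f" unfolding wip_def
  proof (rule set_integral_mono_AE[OF _ wip_integrable[OF f f]])
    show "set_integrable lborel {a0..b0} (\<lambda>x. \<sigma>0 * (f x * f x))"
      by (intro borel_integrable_atLeastAtMost' continuous_intros f)
    show "AE x\<in>{a0..b0} in lborel. \<sigma>0 * (f x * f x) \<le> c x * f x * f x"
      using \<sigma> by eventually_elim (auto simp: mult.assoc intro: mult_right_mono)
  qed
  finally show ?thesis .
qed

section \<open>The forms in terms of derivatives\<close>

lemma C1_deriv_on_continuous:
  assumes "C1_deriv_on a0 b0 f g"
  shows "continuous_on {a0..b0} f" "continuous_on {a0..b0} g"
  using assms unfolding C1_deriv_on_def by auto

lemma C1_deriv_on_deriv_eq:
  "C1_deriv_on a0 b0 f g \<Longrightarrow> x \<in> {a0<..<b0} \<Longrightarrow> deriv f x = g x"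
  unfolding C1_deriv_on_def by (auto intro: DERIV_imp_deriv)

lemma C1_deriv_on_cong:
  assumes C: "C1_deriv_on a0 b0 f g" and eq: "\<And>y. y \<in> {a0..b0} \<Longrightarrow> f y = f' y"
  shows "C1_deriv_on a0 b0 f' g"
  unfolding C1_deriv_on_def
proof (intro conjI ballI)
  show "continuous_on {a0..b0} f'"
    using C eq continuous_on_eq[of "{a0..b0}" f f'] by (auto simp: C1_deriv_on_def)
  show "continuous_on {a0..b0} g" using C by (simp add: C1_deriv_on_def)
  fix x assume x: "x \<in> {a0<..<b0}"
  have "(f has_real_derivative g x) (at x)" using C x by (simp add: C1_deriv_on_def)
  then show "(f' has_real_derivative g x) (at x)"
    by (rule has_field_derivative_transform_within_open[where S="{a0<..<b0}"]) (use x eq in auto)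
qed

lemma C1_deriv_on_add_scaled:
  assumes "C1_deriv_on a0 b0 f gf" "C1_deriv_on a0 b0 h gh"
  shows "C1_deriv_on a0 b0 (\<lambda>y. f y + s * h y) (\<lambda>x. gf x + s * gh x)"
  using assms unfolding C1_deriv_on_def by (auto intro!: continuous_intros derivative_eq_intros)

lemma C1_deriv_on_diff:
  assumes "C1_deriv_on a0 b0 f gf" "C1_deriv_on a0 b0 h gh"
  shows "C1_deriv_on a0 b0 (\<lambda>y. f y - h y) (\<lambda>x. gf x - gh x)"
  using assms unfolding C1_deriv_on_def by (auto intro!: continuous_intros derivative_eq_intros)

lemma C1_deriv_on_zero:
  "(\<And>x. x \<in> {a0..b0} \<Longrightarrow> f x = 0) \<Longrightarrow> C1_deriv_on a0 b0 f (\<lambda>x. 0)"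
  by (rule C1_deriv_on_cong[of _ _ "\<lambda>x. 0"]) (auto simp: C1_deriv_on_def)

lemma ip_deriv_self_eq_0:
  assumes ab: "a0 < b0" and u: "C1_deriv_on a0 b0 u gu" and "u a0 = 0" "u b0 = 0"
  shows "ip a0 b0 gu u = 0"
proof -
  have "((\<lambda>x. (u x)\<^sup>2 / 2) has_vector_derivative (gu x * u x)) (at x)" if "x \<in> {a0<..<b0}" for x
  proof -
    have "(u has_real_derivative gu x) (at x)" using u that unfolding C1_deriv_on_def by blast
    then have "((\<lambda>x. (u x)\<^sup>2 / 2) has_real_derivative (2 * u x * gu x) / 2) (at x)"
      by (auto intro!: derivative_eq_intros)
    then show ?thesis by (simp add: has_real_derivative_iff_has_vector_derivative mult.commute)
  qed
  moreover have "continuous_on {a0..b0} (\<lambda>x. (u x)\<^sup>2 / 2)"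
    using C1_deriv_on_continuous[OF u] by (intro continuous_intros) auto
  ultimately have "((\<lambda>x. gu x * u x) has_integral ((u b0)\<^sup>2 / 2 - (u a0)\<^sup>2 / 2)) {a0..b0}"
    using fundamental_theorem_of_calculus_interior[of a0 b0 "\<lambda>x. (u x)\<^sup>2 / 2"] ab by simp
  then show ?thesis
    using assms ip_eq_integral[OF C1_deriv_on_continuous(2,1)[OF u]] by (simp add: integral_unique)
qed

text \<open>The stabilisation \<open>s_MQ\<close>, written with the derivatives \<open>E k\<close> of the fluctuations \<open>u - \<Pi>\<^sub>k u\<close>.\<close>

definition stab :: "real \<Rightarrow> real \<Rightarrow> nat \<Rightarrow> real \<Rightarrow> real \<Rightarrow> (nat \<Rightarrow> real \<Rightarrow> real) \<Rightarrow>
    (nat \<Rightarrow> real \<Rightarrow> real) \<Rightarrow> real" where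
  "stab a0 b0 L \<tau> bb Eu Ev = \<tau> * (\<Sum>k\<in>{1..L}. (1 / 2 ^ k) * (bb\<^sup>2 * ip a0 b0 (Eu k) (Ev k)))"

lemma s_MQ_eq_stab:
  assumes Eu: "\<forall>k\<in>{1..L}. C1_deriv_on a0 b0 (\<lambda>y. u y - Proj k u y) (Eu k)"
    and Ev: "\<forall>k\<in>{1..L}. C1_deriv_on a0 b0 (\<lambda>y. v y - Proj k v y) (Ev k)"
  shows "s_MQ a0 b0 L \<tau> bb Proj u v = stab a0 b0 L \<tau> bb Eu Ev"
  unfolding s_MQ_def stab_def
proof (intro arg_cong[where f="\<lambda>x. \<tau> * x"] sum.cong refl arg_cong[where f="\<lambda>x. 1 / 2 ^ _ * x"])
  fix k assume "k \<in> {1..L}"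
  then have cu: "C1_deriv_on a0 b0 (\<lambda>y. u y - Proj k u y) (Eu k)"
    and cv: "C1_deriv_on a0 b0 (\<lambda>y. v y - Proj k v y) (Ev k)" using Eu Ev by auto
  have "(LINT x:{a0..b0}|lborel. bb * deriv (\<lambda>y. u y - Proj k u y) x * (bb * deriv (\<lambda>y. v y - Proj k v y) x))
      = (LINT x:{a0..b0}|lborel. bb\<^sup>2 * (Eu k x * Ev k x))"
    by (rule set_integral_eq_if_eq_on_interior)
       (use C1_deriv_on_continuous[OF cu] C1_deriv_on_continuous[OF cv] C1_deriv_on_deriv_eq[OF cu]
          C1_deriv_on_deriv_eq[OF cv] in \<open>auto intro!: continuous_intros simp: power2_eq_square\<close>)
  then show "(LINT x:{a0..b0}|lborel. bb * deriv (\<lambda>y. u y - Proj k u y) x * (bb * deriv (\<lambda>y. v y - Proj k v y) x))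
      = bb\<^sup>2 * ip a0 b0 (Eu k) (Ev k)"
    unfolding ip_def by simp
qed

lemma a_form_eq:
  assumes u: "C1_deriv_on a0 b0 u gu" and v: "C1_deriv_on a0 b0 v gv"
  shows "a_form a0 b0 \<epsilon> bb c u v = \<epsilon> * ip a0 b0 gu gv + bb * ip a0 b0 gu v + wip a0 b0 c u v"
proof -
  have "(LINT x:{a0..b0}|lborel. deriv u x * deriv v x) = ip a0 b0 gu gv"
    unfolding ip_def
    by (rule set_integral_eq_if_eq_on_interior)
       (use C1_deriv_on_continuous[OF u] C1_deriv_on_continuous[OF v] C1_deriv_on_deriv_eq[OF u]
          C1_deriv_on_deriv_eq[OF v] in \<open>auto intro!: continuous_intros\<close>)
  moreover have "(LINT x:{a0..b0}|lborel. bb * deriv u x * v x) = (LINT x:{a0..b0}|lborel. bb * (gu x * v x))"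
    by (rule set_integral_eq_if_eq_on_interior)
       (use C1_deriv_on_continuous[OF u] C1_deriv_on_continuous[OF v] C1_deriv_on_deriv_eq[OF u] in
         \<open>auto intro!: continuous_intros\<close>)
  ultimately show ?thesis unfolding a_form_def wip_def ip_def by simp
qed

lemma a_MQ_eq:
  assumes "C1_deriv_on a0 b0 u gu" "C1_deriv_on a0 b0 v gv"
    and "\<forall>k\<in>{1..L}. C1_deriv_on a0 b0 (\<lambda>y. u y - Proj k u y) (Eu k)"
    and "\<forall>k\<in>{1..L}. C1_deriv_on a0 b0 (\<lambda>y. v y - Proj k v y) (Ev k)"
  shows "a_MQ a0 b0 L \<epsilon> bb c \<tau> Proj u v
    = \<epsilon> * ip a0 b0 gu gv + bb * ip a0 b0 gu v + wip a0 b0 c u v + stab a0 b0 L \<tau> bb Eu Ev"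
  using assms by (simp add: a_MQ_def a_form_eq s_MQ_eq_stab)

lemma MQSD_norm_eq:
  assumes v: "C1_deriv_on a0 b0 v gv" and Ev: "\<forall>k\<in>{1..L}. C1_deriv_on a0 b0 (\<lambda>y. v y - Proj k v y) (Ev k)"
  shows "MQSD_norm a0 b0 L \<epsilon> bb c \<tau> Proj v = sqrt (\<epsilon> * ip a0 b0 gv gv + wip a0 b0 c v v
      + stab a0 b0 L \<tau> bb Ev Ev + \<tau> * (1 / 2 ^ L) * (bb\<^sup>2 * ip a0 b0 gv gv))"
proof -
  have "(LINT x:{a0..b0}|lborel. (deriv v x)\<^sup>2) = ip a0 b0 gv gv"
    unfolding ip_def
    by (rule set_integral_eq_if_eq_on_interior)
       (use C1_deriv_on_continuous[OF v] C1_deriv_on_deriv_eq[OF v] in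
         \<open>auto intro!: continuous_intros simp: power2_eq_square\<close>)
  moreover have "(LINT x:{a0..b0}|lborel. (bb * deriv v x)\<^sup>2) = (LINT x:{a0..b0}|lborel. bb\<^sup>2 * (gv x * gv x))"
    by (rule set_integral_eq_if_eq_on_interior)
       (use C1_deriv_on_continuous[OF v] C1_deriv_on_deriv_eq[OF v] in
         \<open>auto intro!: continuous_intros simp: power2_eq_square\<close>)
  moreover have "(LINT x:{a0..b0}|lborel. c x * (v x)\<^sup>2) = wip a0 b0 c v v"
    unfolding wip_def by (simp add: power2_eq_square mult.assoc)
  moreover have "s_MQ a0 b0 L \<tau> bb Proj v v = stab a0 b0 L \<tau> bb Ev Ev"
    by (rule s_MQ_eq_stab; rule Ev)
  ultimately show ?thesis
    unfolding MQSD_norm_def G_norm_sq_def ip_def by simp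
qed

lemma sum_inverse_powers_two: "(\<Sum>k\<in>{1..L}. (1::real) / 2 ^ k) = 1 - 1 / 2 ^ L"
  by (induction L) (simp_all add: field_simps)

lemma stab_nonneg: "\<tau> \<ge> 0 \<Longrightarrow> stab a0 b0 L \<tau> bb E E \<ge> 0"
  unfolding stab_def by (intro mult_nonneg_nonneg sum_nonneg) (auto intro: ip_nonneg)

lemma stab_add_scaled:
  assumes "\<forall>k\<in>{1..L}. continuous_on {a0..b0} (Eu k)" "\<forall>k\<in>{1..L}. continuous_on {a0..b0} (Ev k)"
    "\<forall>k\<in>{1..L}. continuous_on {a0..b0} (Ez k)"
  shows "stab a0 b0 L \<tau> bb Eu (\<lambda>k x. Ev k x + s * Ez k x)
    = stab a0 b0 L \<tau> bb Eu Ev + s * stab a0 b0 L \<tau> bb Eu Ez"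
proof -
  have "(\<Sum>k\<in>{1..L}. (1 / 2 ^ k) * (bb\<^sup>2 * ip a0 b0 (Eu k) (\<lambda>x. Ev k x + s * Ez k x)))
      = (\<Sum>k\<in>{1..L}. (1 / 2 ^ k) * (bb\<^sup>2 * ip a0 b0 (Eu k) (Ev k))
          + s * ((1 / 2 ^ k) * (bb\<^sup>2 * ip a0 b0 (Eu k) (Ez k))))"
    using assms by (intro sum.cong) (auto simp: ip_add_scaled algebra_simps)
  then show ?thesis unfolding stab_def by (simp add: sum.distrib sum_distrib_left algebra_simps)
qed

lemma stab_young:
  assumes \<tau>: "\<tau> \<ge> 0" and \<eta>: "\<eta> > 0"
    and Eu: "\<forall>k\<in>{1..L}. continuous_on {a0..b0} (Eu k)" and Ez: "\<forall>k\<in>{1..L}. continuous_on {a0..b0} (Ez k)"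
  shows "2 * \<bar>stab a0 b0 L \<tau> bb Eu Ez\<bar> \<le> \<eta> * stab a0 b0 L \<tau> bb Eu Eu + stab a0 b0 L \<tau> bb Ez Ez / \<eta>"
proof -
  have "2 * \<bar>\<Sum>k\<in>{1..L}. (1 / 2 ^ k) * (bb\<^sup>2 * ip a0 b0 (Eu k) (Ez k))\<bar>
      \<le> 2 * (\<Sum>k\<in>{1..L}. \<bar>(1 / 2 ^ k) * (bb\<^sup>2 * ip a0 b0 (Eu k) (Ez k))\<bar>)"
    by (rule mult_left_mono[OF sum_abs]) simp
  also have "\<dots> = (\<Sum>k\<in>{1..L}. (1 / 2 ^ k) * bb\<^sup>2 * (2 * \<bar>ip a0 b0 (Eu k) (Ez k)\<bar>))"
    by (simp add: sum_distrib_left abs_mult algebra_simps)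
  finally have "\<tau> * (2 * \<bar>\<Sum>k\<in>{1..L}. (1 / 2 ^ k) * (bb\<^sup>2 * ip a0 b0 (Eu k) (Ez k))\<bar>)
      \<le> \<tau> * (\<Sum>k\<in>{1..L}. (1 / 2 ^ k) * bb\<^sup>2 * (2 * \<bar>ip a0 b0 (Eu k) (Ez k)\<bar>))"
    by (rule mult_left_mono[OF _ \<tau>])
  then have "2 * \<bar>stab a0 b0 L \<tau> bb Eu Ez\<bar>
      \<le> \<tau> * (\<Sum>k\<in>{1..L}. (1 / 2 ^ k) * bb\<^sup>2 * (2 * \<bar>ip a0 b0 (Eu k) (Ez k)\<bar>))"
    unfolding stab_def using \<tau> by (simp add: abs_mult mult.left_commute)
  also have "\<dots> \<le> \<tau> * (\<Sum>k\<in>{1..L}. (1 / 2 ^ k) * bb\<^sup>2 * (\<eta> * ip a0 b0 (Eu k) (Eu k) + ip a0 b0 (Ez k) (Ez k) / \<eta>))"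
    using ip_young Eu Ez \<eta> \<tau> by (intro mult_left_mono sum_mono) auto
  also have "\<dots> = \<eta> * stab a0 b0 L \<tau> bb Eu Eu + stab a0 b0 L \<tau> bb Ez Ez / \<eta>"
    unfolding stab_def by (simp add: sum.distrib sum_distrib_left sum_divide_distrib algebra_simps)
  finally show ?thesis .
qed

lemma stab_sq_add_scaled_le:
  assumes \<tau>: "\<tau> \<ge> 0"
    and Eu: "\<forall>k\<in>{1..L}. continuous_on {a0..b0} (Eu k)" and Ez: "\<forall>k\<in>{1..L}. continuous_on {a0..b0} (Ez k)"
  shows "stab a0 b0 L \<tau> bb (\<lambda>k x. Eu k x + s * Ez k x) (\<lambda>k x. Eu k x + s * Ez k x)
     \<le> 2 * stab a0 b0 L \<tau> bb Eu Eu + 2 * s\<^sup>2 * stab a0 b0 L \<tau> bb Ez Ez"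
proof -
  have "stab a0 b0 L \<tau> bb (\<lambda>k x. Eu k x + s * Ez k x) (\<lambda>k x. Eu k x + s * Ez k x)
      \<le> \<tau> * (\<Sum>k\<in>{1..L}. (1 / 2 ^ k) * (bb\<^sup>2 * (2 * ip a0 b0 (Eu k) (Eu k) + 2 * s\<^sup>2 * ip a0 b0 (Ez k) (Ez k))))"
    unfolding stab_def using ip_sq_add_scaled_le Eu Ez \<tau> by (intro mult_left_mono sum_mono) auto
  also have "\<dots> = 2 * stab a0 b0 L \<tau> bb Eu Eu + 2 * s\<^sup>2 * stab a0 b0 L \<tau> bb Ez Ez"
    unfolding stab_def by (simp add: sum.distrib sum_distrib_left algebra_simps)
  finally show ?thesis .
qed

lemma stab_ge_coarsest:
  assumes "\<tau> \<ge> 0" "L \<ge> 1"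
  shows "\<tau> * (1 / 2 ^ L) * (bb\<^sup>2 * ip a0 b0 (E L) (E L)) \<le> stab a0 b0 L \<tau> bb E E"
proof -
  have "(1 / 2 ^ L) * (bb\<^sup>2 * ip a0 b0 (E L) (E L)) \<le> (\<Sum>k\<in>{1..L}. (1 / 2 ^ k) * (bb\<^sup>2 * ip a0 b0 (E k) (E k)))"
    by (rule member_le_sum) (use assms in \<open>auto intro!: divide_nonneg_pos mult_nonneg_nonneg ip_nonneg\<close>)
  then show ?thesis unfolding stab_def using mult_left_mono[OF _ assms(1)]
    by (simp add: mult.assoc times_divide_eq_right[symmetric] del: times_divide_eq_right)
qed

lemma stab_le:
  assumes \<tau>: "\<tau> \<ge> 0" and B: "\<forall>k\<in>{1..L}. ip a0 b0 (E k) (E k) \<le> \<Lambda>" and \<Lambda>: "\<Lambda> \<ge> 0"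
  shows "stab a0 b0 L \<tau> bb E E \<le> \<tau> * bb\<^sup>2 * \<Lambda>"
proof -
  have "(\<Sum>k\<in>{1..L}. (1 / 2 ^ k) * (bb\<^sup>2 * ip a0 b0 (E k) (E k))) \<le> (\<Sum>k\<in>{1..L}. (1 / 2 ^ k) * (bb\<^sup>2 * \<Lambda>))"
    using B by (intro sum_mono mult_left_mono) auto
  also have "\<dots> = (1 - 1 / 2 ^ L) * (bb\<^sup>2 * \<Lambda>)"
    by (simp only: sum_distrib_right[symmetric] sum_inverse_powers_two)
  also have "\<dots> \<le> bb\<^sup>2 * \<Lambda>" using \<Lambda> by (simp add: mult_left_le_one_le)
  finally show ?thesis unfolding stab_def using mult_left_mono[OF _ \<tau>] by (simp add: mult.assoc)
qed

section \<open>The constants\<close>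

text \<open>The data on which the inf-sup constant depends: everything except \<open>\<epsilon>\<close>, the mesh, \<open>\<tau>\<close>
  and the projectors.\<close>

locale mq_data = bounded_weight a0 b0 c Mc for a0 b0 :: real and c :: "real \<Rightarrow> real" and Mc :: real +
  fixes \<sigma>0 :: real and p L :: nat and bb C\<tau> \<alpha> C\<Pi> Kinv :: real
  assumes ab: "a0 < b0" and p2: "p \<ge> 2" and L1: "L \<ge> 1"
    and c_ge: "AE x in lborel. x \<in> {a0..b0} \<longrightarrow> c x \<ge> \<sigma>0" and \<sigma>0: "\<sigma>0 > 0"
    and Mc1: "Mc \<ge> 1" and C\<tau>: "C\<tau> > 0" and \<alpha>: "\<alpha> > 0" and Kinv: "Kinv > 0"
    and inverse_estimate: "\<And>n f g. n \<ge> 1 \<Longrightarrow> piecewise_poly a0 b0 n p f \<Longrightarrow> C1_deriv_on a0 b0 f g \<Longrightarrow>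
       integral {a0..b0} (\<lambda>x. (g x)\<^sup>2) \<le> Kinv * (real n / (b0 - a0))\<^sup>2 * integral {a0..b0} (\<lambda>x. (f x)\<^sup>2)"
begin

definition "cross_const = 1 + C\<tau> * Kinv + C\<tau> * (b0 - a0) * Mc / \<bar>bb\<bar> + 2 ^ (L + 1) * C\<tau>\<^sup>2 * Kinv * (1 + C\<Pi>\<^sup>2)"
definition "delta = \<alpha> / (4 * cross_const)"
definition "coercivity_const = min (1 / 2) (delta * \<alpha> / 4)"
definition "test_norm_const = 2 + 4 * delta\<^sup>2 * (cross_const + C\<tau>\<^sup>2 * Kinv)"
definition "beta = coercivity_const / 3 / sqrt test_norm_const"

lemma cross_const_ge_1: "cross_const \<ge> 1"
  unfolding cross_const_def using ab C\<tau> Mc1 Kinv by (simp add: add_nonneg_nonneg)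

lemma delta_pos: "delta > 0"
  unfolding delta_def using cross_const_ge_1 \<alpha> by simp

lemma coercivity_const_pos: "coercivity_const > 0"
  unfolding coercivity_const_def using delta_pos \<alpha> by simp

lemma test_norm_const_pos: "test_norm_const > 0"
  unfolding test_norm_const_def using cross_const_ge_1 Kinv by (intro add_pos_nonneg) auto

lemma beta_pos: "beta > 0"
  unfolding beta_def using coercivity_const_pos test_norm_const_pos by simp

lemma wip_ge_ip: "continuous_on {a0..b0} f \<Longrightarrow> \<sigma>0 * ip a0 b0 f f \<le> wip a0 b0 c f f"
  by (rule ip_le_wip[OF _ c_ge])

lemma wip_self_nonneg: "continuous_on {a0..b0} f \<Longrightarrow> wip a0 b0 c f f \<ge> 0"
  using wip_ge_ip[of f] ip_nonneg[of a0 b0 f] \<sigma>0 by (meson less_imp_le mult_nonneg_nonneg order_trans)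

end

section \<open>A fixed discretisation\<close>

locale mq_setting = mq_data +
  fixes \<epsilon> :: real and M :: nat and \<tau> :: real and Proj :: "nat \<Rightarrow> (real \<Rightarrow> real) \<Rightarrow> real \<Rightarrow> real"
  assumes \<epsilon>: "\<epsilon> > 0" and M1: "M \<ge> 1" and \<tau>0: "\<tau> \<ge> 0"
    and infsup: "\<forall>q\<in>spline_space a0 b0 (2 ^ L * M div 2 ^ L) (p - 1).
          Sup ((\<lambda>v. ip a0 b0 v q / l2norm a0 b0 v) ` {v \<in> Vh a0 b0 (2 ^ L * M) p. nonzero_on a0 b0 v})
            \<ge> \<alpha> * l2norm a0 b0 q"
    and \<tau>_le: "\<tau> \<le> C\<tau> * 2 ^ L * ((b0 - a0) / real (2 ^ L * M))\<^sup>2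
                    / max \<epsilon> ((b0 - a0) / real (2 ^ L * M) * \<bar>bb\<bar>)"
    and Proj_quasi_interp: "\<forall>k\<in>{1..L}. quasi_interp a0 b0 (2 ^ L * M div 2 ^ k) p
                              (2 ^ k * ((b0 - a0) / real (2 ^ L * M))) C\<Pi> (Proj k)"
begin

abbreviation "N \<equiv> 2 ^ L * M"
definition "h = (b0 - a0) / real N"
definition "Kh = Kinv / h\<^sup>2"

text \<open>\<open>\<theta> = \<tau> c\<^sub>L\<close> weights the streamline-diffusion part of the MQSD norm.\<close>
definition "\<theta> = \<tau> / 2 ^ L"

abbreviation "aMQ u v \<equiv> a_MQ a0 b0 L \<epsilon> bb c \<tau> Proj u v"
abbreviation "normMQSD v \<equiv> MQSD_norm a0 b0 L \<epsilon> bb c \<tau> Proj v"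

lemma N_ge_1: "N \<ge> 1"
  using M1 by simp

lemma h_pos: "h > 0"
  using ab N_ge_1 by (simp add: h_def)

lemma h_le: "h \<le> b0 - a0"
proof -
  have "real N \<ge> 1" using N_ge_1 by linarith
  then show ?thesis using ab by (simp add: h_def divide_le_eq)
qed

lemma Kh_nonneg: "Kh \<ge> 0"
  using Kinv by (simp add: Kh_def)

lemma Kh_mult_h_sq: "Kh * h\<^sup>2 = Kinv"
  using h_pos by (simp add: Kh_def)

lemma coarse_mesh:
  assumes "k \<le> L"
  shows "N div 2 ^ k \<ge> 1" "N div 2 ^ k * 2 ^ k = N"
proof -
  have e: "(2::nat) ^ L = 2 ^ (L - k) * 2 ^ k" using assms by (simp add: power_add[symmetric])
  show "N div 2 ^ k \<ge> 1" "N div 2 ^ k * 2 ^ k = N" unfolding e using M1 by simp_all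
qed

lemma theta_nonneg: "\<theta> \<ge> 0"
  using \<tau>0 by (simp add: \<theta>_def)

lemma theta_le: "\<theta> \<le> C\<tau> * h\<^sup>2 / max \<epsilon> (h * \<bar>bb\<bar>)"
  using \<tau>_le by (simp add: \<theta>_def h_def field_simps)

lemma theta_eps_le: "\<theta> * \<epsilon> \<le> C\<tau> * h\<^sup>2"
proof -
  have "\<theta> * \<epsilon> \<le> C\<tau> * h\<^sup>2 / max \<epsilon> (h * \<bar>bb\<bar>) * \<epsilon>" by (rule mult_right_mono[OF theta_le]) (use \<epsilon> in simp)
  also have "\<dots> \<le> C\<tau> * h\<^sup>2" using \<epsilon> C\<tau> by (simp add: divide_le_eq mult_left_mono)
  finally show ?thesis .
qed

lemma theta_bb_le: "\<theta> * \<bar>bb\<bar> \<le> C\<tau> * h"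
proof -
  have "\<theta> * (h * \<bar>bb\<bar>) \<le> C\<tau> * h\<^sup>2 / max \<epsilon> (h * \<bar>bb\<bar>) * (h * \<bar>bb\<bar>)"
    by (rule mult_right_mono[OF theta_le]) (use h_pos in simp)
  also have "\<dots> \<le> C\<tau> * h\<^sup>2" using \<epsilon> C\<tau> by (simp add: divide_le_eq mult_left_mono)
  finally have "(\<theta> * \<bar>bb\<bar>) * h \<le> (C\<tau> * h) * h" by (simp add: power2_eq_square algebra_simps)
  then show ?thesis using h_pos by simp
qed

lemma Vh_C1_deriv:
  assumes "w \<in> Vh a0 b0 N p"
  obtains g where "C1_deriv_on a0 b0 w g"
  using spline_C1_deriv[OF ab N_ge_1 p2] assms by (auto simp: Vh_def)

lemma ip_deriv_le:
  assumes "piecewise_poly a0 b0 N p f" "C1_deriv_on a0 b0 f g"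
  shows "ip a0 b0 g g \<le> Kh * ip a0 b0 f f"
proof -
  note cont = C1_deriv_on_continuous[OF assms(2)]
  have "ip a0 b0 g g = integral {a0..b0} (\<lambda>x. (g x)\<^sup>2)"
    using ip_eq_integral[OF cont(2) cont(2)] by (simp add: power2_eq_square)
  also have "\<dots> \<le> Kh * integral {a0..b0} (\<lambda>x. (f x)\<^sup>2)"
    using inverse_estimate[OF N_ge_1 assms] ab by (simp add: Kh_def h_def power_divide)
  also have "integral {a0..b0} (\<lambda>x. (f x)\<^sup>2) = ip a0 b0 f f"
    using ip_eq_integral[OF cont(1) cont(1)] by (simp add: power2_eq_square)
  finally show ?thesis .
qed

lemma Proj_props:
  assumes w: "w \<in> Vh a0 b0 N p" and k: "k \<in> {1..L}"
  shows "quasi_interp a0 b0 (N div 2 ^ k) p (2 ^ k * h) C\<Pi> (Proj k)"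
    and "L2_on a0 b0 w"
    and "Proj k w \<in> spline_space a0 b0 (N div 2 ^ k) p"
    and "ip a0 b0 (Proj k w) (Proj k w) \<le> C\<Pi>\<^sup>2 * ip a0 b0 w w"
    and "piecewise_poly a0 b0 N p (Proj k w)"
proof -
  show q: "quasi_interp a0 b0 (N div 2 ^ k) p (2 ^ k * h) C\<Pi> (Proj k)"
    using Proj_quasi_interp k by (simp add: h_def)
  obtain g where "C1_deriv_on a0 b0 w g" using Vh_C1_deriv[OF w] .
  then show L2: "L2_on a0 b0 w" using L2_on_continuous C1_deriv_on_continuous by blast
  show sp: "Proj k w \<in> spline_space a0 b0 (N div 2 ^ k) p"
    using q L2 unfolding quasi_interp_def by blast
  have "l2norm a0 b0 (Proj k w) \<le> C\<Pi> * l2norm a0 b0 w" using q L2 unfolding quasi_interp_def by blast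
  then have "(sqrt (ip a0 b0 (Proj k w) (Proj k w)))\<^sup>2 \<le> (C\<Pi> * sqrt (ip a0 b0 w w))\<^sup>2"
    unfolding l2norm_def by (intro power_mono) (auto simp: ip_nonneg)
  then show "ip a0 b0 (Proj k w) (Proj k w) \<le> C\<Pi>\<^sup>2 * ip a0 b0 w w"
    using ip_nonneg[of a0 b0 "Proj k w"] ip_nonneg[of a0 b0 w] by (simp add: power_mult_distrib)
  have "k \<le> L" using k by simp
  from spline_piecewise_poly_refine[OF ab coarse_mesh(1)[OF this] _ sp, of "2 ^ k"]
  show "piecewise_poly a0 b0 N p (Proj k w)" using coarse_mesh(2)[OF \<open>k \<le> L\<close>] by simp
qed

definition has_derivs :: "(real \<Rightarrow> real) \<Rightarrow> (real \<Rightarrow> real) \<Rightarrow> (nat \<Rightarrow> real \<Rightarrow> real) \<Rightarrow> bool" where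
  "has_derivs w gw Ew \<longleftrightarrow> C1_deriv_on a0 b0 w gw \<and>
     (\<forall>k\<in>{1..L}. C1_deriv_on a0 b0 (\<lambda>y. w y - Proj k w y) (Ew k))"

lemma has_derivs_continuous:
  assumes "has_derivs w gw Ew"
  shows "continuous_on {a0..b0} w" "continuous_on {a0..b0} gw" "\<forall>k\<in>{1..L}. continuous_on {a0..b0} (Ew k)"
  using assms C1_deriv_on_continuous unfolding has_derivs_def by blast+

text \<open>\<open>gw - Ew L\<close> is the derivative of \<open>\<Pi>\<^sub>L w\<close>, hence an element of \<open>Q\<^sub>L\<close>.\<close>

lemma Vh_has_derivs:
  assumes w: "w \<in> Vh a0 b0 N p"
  obtains gw Ew where "has_derivs w gw Ew"
    and "ip a0 b0 gw gw \<le> Kh * ip a0 b0 w w"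
    and "\<forall>k\<in>{1..L}. ip a0 b0 (Ew k) (Ew k) \<le> 2 * Kh * (1 + C\<Pi>\<^sup>2) * ip a0 b0 w w"
    and "(\<lambda>x. gw x - Ew L x) \<in> spline_space a0 b0 (N div 2 ^ L) (p - 1)"
proof -
  obtain gw where gw: "C1_deriv_on a0 b0 w gw" using Vh_C1_deriv[OF w] .
  have "\<exists>g. C1_deriv_on a0 b0 (Proj k w) g \<and> g \<in> spline_space a0 b0 (N div 2 ^ k) (p - 1)"
    if k: "k \<in> {1..L}" for k
    using spline_C1_deriv[OF ab _ p2 Proj_props(3)[OF w k]] coarse_mesh(1)[of k] k by auto
  then obtain gP where gP: "\<And>k. k \<in> {1..L} \<Longrightarrow> C1_deriv_on a0 b0 (Proj k w) (gP k)"
    "\<And>k. k \<in> {1..L} \<Longrightarrow> gP k \<in> spline_space a0 b0 (N div 2 ^ k) (p - 1)"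
    by metis
  define Ew where "Ew k x = gw x - gP k x" for k x
  have derivs: "has_derivs w gw Ew"
    unfolding has_derivs_def Ew_def using gw gP(1) C1_deriv_on_diff by blast
  have inv: "ip a0 b0 gw gw \<le> Kh * ip a0 b0 w w"
    by (rule ip_deriv_le[OF _ gw]) (use w spline_piecewise_poly_refine[OF ab N_ge_1, of 1] in \<open>auto simp: Vh_def\<close>)
  have "ip a0 b0 (Ew k) (Ew k) \<le> 2 * Kh * (1 + C\<Pi>\<^sup>2) * ip a0 b0 w w" if k: "k \<in> {1..L}" for k
  proof -
    have "ip a0 b0 (Ew k) (Ew k) = ip a0 b0 (\<lambda>x. gw x + (-1) * gP k x) (\<lambda>x. gw x + (-1) * gP k x)"
      by (rule ip_cong) (simp_all add: Ew_def)
    also have "\<dots> \<le> 2 * ip a0 b0 gw gw + 2 * (-1)\<^sup>2 * ip a0 b0 (gP k) (gP k)"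
      by (rule ip_sq_add_scaled_le[OF C1_deriv_on_continuous(2)[OF gw] C1_deriv_on_continuous(2)[OF gP(1)[OF k]]])
    finally have "ip a0 b0 (Ew k) (Ew k) \<le> 2 * ip a0 b0 gw gw + 2 * ip a0 b0 (gP k) (gP k)" by simp
    moreover have "ip a0 b0 (gP k) (gP k) \<le> Kh * (C\<Pi>\<^sup>2 * ip a0 b0 w w)"
      using ip_deriv_le[OF Proj_props(5)[OF w k] gP(1)[OF k]]
        mult_left_mono[OF Proj_props(4)[OF w k] Kh_nonneg] by linarith
    ultimately show ?thesis using inv by (simp add: algebra_simps)
  qed
  moreover have "(\<lambda>x. gw x - Ew L x) \<in> spline_space a0 b0 (N div 2 ^ L) (p - 1)"
    using gP(2)[of L] L1 by (simp add: Ew_def)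
  ultimately show ?thesis using that derivs inv by blast
qed

lemma Proj_add_scaled:
  assumes u: "u \<in> Vh a0 b0 N p" and z: "z \<in> Vh a0 b0 N p" and k: "k \<in> {1..L}" and y: "y \<in> {a0..b0}"
  shows "Proj k (\<lambda>y. u y + s * z y) y = Proj k u y + s * Proj k z y"
proof -
  have "\<forall>u v \<alpha> \<beta>. L2_on a0 b0 u \<longrightarrow> L2_on a0 b0 v \<longrightarrow>
      (\<forall>x\<in>{a0..b0}. Proj k (\<lambda>y. \<alpha> * u y + \<beta> * v y) x = \<alpha> * Proj k u x + \<beta> * Proj k v x)"
    using Proj_props(1)[OF u k] unfolding quasi_interp_def by blast
  then have "Proj k (\<lambda>y. 1 * u y + s * z y) y = 1 * Proj k u y + s * Proj k z y"
    using Proj_props(2)[OF u k] Proj_props(2)[OF z k] y by blast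
  then show ?thesis by simp
qed

lemma has_derivs_add_scaled:
  assumes u: "u \<in> Vh a0 b0 N p" and z: "z \<in> Vh a0 b0 N p"
    and du: "has_derivs u gu Eu" and dz: "has_derivs z gz Ez"
  shows "has_derivs (\<lambda>y. u y + s * z y) (\<lambda>x. gu x + s * gz x) (\<lambda>k x. Eu k x + s * Ez k x)"
  unfolding has_derivs_def
proof (intro conjI ballI)
  show "C1_deriv_on a0 b0 (\<lambda>y. u y + s * z y) (\<lambda>x. gu x + s * gz x)"
    using du dz C1_deriv_on_add_scaled unfolding has_derivs_def by blast
  fix k assume k: "k \<in> {1..L}"
  have "C1_deriv_on a0 b0 (\<lambda>y. u y - Proj k u y + s * (z y - Proj k z y)) (\<lambda>x. Eu k x + s * Ez k x)"
    using du dz k C1_deriv_on_add_scaled unfolding has_derivs_def by blast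
  then show "C1_deriv_on a0 b0 (\<lambda>y. u y + s * z y - Proj k (\<lambda>y. u y + s * z y) y) (\<lambda>x. Eu k x + s * Ez k x)"
    by (rule C1_deriv_on_cong) (simp add: Proj_add_scaled[OF u z k] algebra_simps)
qed

lemma has_derivs_vanishing:
  assumes w: "w \<in> Vh a0 b0 N p" and w0: "\<And>x. x \<in> {a0..b0} \<Longrightarrow> w x = 0"
  shows "has_derivs w (\<lambda>x. 0) (\<lambda>k x. 0)"
  unfolding has_derivs_def
proof (intro conjI ballI C1_deriv_on_zero)
  fix k x assume k: "k \<in> {1..L}" and x: "x \<in> {a0..b0}"
  have "w \<in> spline_space a0 b0 (N div 2 ^ k) p"
    unfolding spline_space_def
  proof (intro CollectI exI[of _ "\<lambda>j. 0"] conjI allI impI ballI)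
    fix j y assume j: "j < N div 2 ^ k" and y: "y \<in> cell a0 b0 (N div 2 ^ k) j"
    have "cell a0 b0 (N div 2 ^ k) j \<subseteq> {a0..b0}"
      by (rule cell_subset[OF ab coarse_mesh(1) j]) (use k in auto)
    then show "w y = poly 0 y" using w0 y by auto
  qed simp_all
  then have "Proj k w x = w x" using Proj_props(1)[OF w k] x unfolding quasi_interp_def by blast
  then show "w x - Proj k w x = 0" using w0[OF x] by simp
qed (use w0 in simp)

definition energy :: "(real \<Rightarrow> real) \<Rightarrow> (real \<Rightarrow> real) \<Rightarrow> (nat \<Rightarrow> real \<Rightarrow> real) \<Rightarrow> real" where
  "energy w gw Ew = \<epsilon> * ip a0 b0 gw gw + wip a0 b0 c w w + stab a0 b0 L \<tau> bb Ew Ew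
     + \<theta> * (bb\<^sup>2 * ip a0 b0 gw gw)"

definition aMQ_expr :: "(real \<Rightarrow> real) \<Rightarrow> (real \<Rightarrow> real) \<Rightarrow> (nat \<Rightarrow> real \<Rightarrow> real) \<Rightarrow>
    (real \<Rightarrow> real) \<Rightarrow> (real \<Rightarrow> real) \<Rightarrow> (nat \<Rightarrow> real \<Rightarrow> real) \<Rightarrow> real" where
  "aMQ_expr u gu Eu v gv Ev = \<epsilon> * ip a0 b0 gu gv + bb * ip a0 b0 gu v + wip a0 b0 c u v
     + stab a0 b0 L \<tau> bb Eu Ev"

lemma normMQSD_eq:
  assumes "has_derivs v gv Ev"
  shows "normMQSD v = sqrt (energy v gv Ev)"
proof -
  have "normMQSD v = sqrt (\<epsilon> * ip a0 b0 gv gv + wip a0 b0 c v v + stab a0 b0 L \<tau> bb Ev Ev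
      + \<tau> * (1 / 2 ^ L) * (bb\<^sup>2 * ip a0 b0 gv gv))"
    by (rule MQSD_norm_eq) (use assms in \<open>auto simp: has_derivs_def\<close>)
  then show ?thesis unfolding energy_def \<theta>_def by simp
qed

lemma aMQ_eq:
  assumes "has_derivs u gu Eu" "has_derivs v gv Ev"
  shows "aMQ u v = aMQ_expr u gu Eu v gv Ev"
  unfolding aMQ_expr_def by (rule a_MQ_eq) (use assms in \<open>auto simp: has_derivs_def\<close>)

lemma energy_parts_nonneg:
  assumes "has_derivs w gw Ew"
  shows "\<epsilon> * ip a0 b0 gw gw \<ge> 0" "wip a0 b0 c w w \<ge> 0" "stab a0 b0 L \<tau> bb Ew Ew \<ge> 0"
    "\<theta> * (bb\<^sup>2 * ip a0 b0 gw gw) \<ge> 0"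
  using \<epsilon> ip_nonneg[of a0 b0 gw] wip_self_nonneg[OF has_derivs_continuous(1)[OF assms]]
    stab_nonneg[OF \<tau>0] theta_nonneg by auto

lemma energy_nonneg: "has_derivs w gw Ew \<Longrightarrow> energy w gw Ew \<ge> 0"
  using energy_parts_nonneg[of w gw Ew] unfolding energy_def by linarith

lemma aMQ_expr_self:
  assumes u: "u \<in> Vh a0 b0 N p" and du: "has_derivs u gu Eu"
  shows "aMQ_expr u gu Eu u gu Eu = energy u gu Eu - \<theta> * (bb\<^sup>2 * ip a0 b0 gu gu)"
  using ip_deriv_self_eq_0[OF ab _, of u gu] u du
  unfolding aMQ_expr_def energy_def has_derivs_def Vh_def by simp

lemma aMQ_expr_add_scaled:
  assumes du: "has_derivs u gu Eu" and dv: "has_derivs v gv Ev" and dz: "has_derivs z gz Ez"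
  shows "aMQ_expr u gu Eu (\<lambda>y. v y + s * z y) (\<lambda>x. gv x + s * gz x) (\<lambda>k x. Ev k x + s * Ez k x)
    = aMQ_expr u gu Eu v gv Ev + s * aMQ_expr u gu Eu z gz Ez"
  using ip_add_scaled[OF has_derivs_continuous(2)[OF du] has_derivs_continuous(2)[OF dv]
      has_derivs_continuous(2)[OF dz]]
    ip_add_scaled[OF has_derivs_continuous(2)[OF du] has_derivs_continuous(1)[OF dv]
      has_derivs_continuous(1)[OF dz]]
    wip_add_scaled[OF has_derivs_continuous(1)[OF du] has_derivs_continuous(1)[OF dv]
      has_derivs_continuous(1)[OF dz]]
    stab_add_scaled[OF has_derivs_continuous(3)[OF du] has_derivs_continuous(3)[OF dv]
      has_derivs_continuous(3)[OF dz]]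
  unfolding aMQ_expr_def by (simp add: algebra_simps)

lemma energy_add_scaled_le:
  assumes du: "has_derivs u gu Eu" and dz: "has_derivs z gz Ez"
  shows "energy (\<lambda>y. u y + s * z y) (\<lambda>x. gu x + s * gz x) (\<lambda>k x. Eu k x + s * Ez k x)
    \<le> 2 * energy u gu Eu + 2 * s\<^sup>2 * energy z gz Ez"
proof -
  note cu = has_derivs_continuous[OF du] and cz = has_derivs_continuous[OF dz]
  have g: "ip a0 b0 (\<lambda>x. gu x + s * gz x) (\<lambda>x. gu x + s * gz x) \<le> 2 * ip a0 b0 gu gu + 2 * s\<^sup>2 * ip a0 b0 gz gz"
    by (rule ip_sq_add_scaled_le[OF cu(2) cz(2)])
  have "\<epsilon> * ip a0 b0 (\<lambda>x. gu x + s * gz x) (\<lambda>x. gu x + s * gz x)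
      \<le> 2 * (\<epsilon> * ip a0 b0 gu gu) + 2 * s\<^sup>2 * (\<epsilon> * ip a0 b0 gz gz)"
    using mult_left_mono[OF g, of \<epsilon>] \<epsilon> by (simp add: algebra_simps)
  moreover have "\<theta> * (bb\<^sup>2 * ip a0 b0 (\<lambda>x. gu x + s * gz x) (\<lambda>x. gu x + s * gz x))
      \<le> 2 * (\<theta> * (bb\<^sup>2 * ip a0 b0 gu gu)) + 2 * s\<^sup>2 * (\<theta> * (bb\<^sup>2 * ip a0 b0 gz gz))"
    using mult_left_mono[OF g, of "\<theta> * bb\<^sup>2"] theta_nonneg by (simp add: algebra_simps)
  moreover note wip_sq_add_scaled_le[OF cu(1) cz(1), of s] stab_sq_add_scaled_le[OF \<tau>0 cu(3) cz(3), of bb s]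
  ultimately show ?thesis unfolding energy_def by (simp add: algebra_simps)
qed

lemma aMQ_expr_young:
  assumes du: "has_derivs u gu Eu" and dv: "has_derivs v gv Ev" and \<eta>: "\<eta> > 0"
  shows "2 * \<bar>aMQ_expr u gu Eu v gv Ev\<bar>
    \<le> ((\<epsilon> + \<bar>bb\<bar>) * ip a0 b0 gu gu + wip a0 b0 c u u + stab a0 b0 L \<tau> bb Eu Eu) / \<eta>
      + \<eta> * ((1 + \<bar>bb\<bar> / \<sigma>0) * energy v gv Ev)"
proof -
  note cu = has_derivs_continuous[OF du] and cv = has_derivs_continuous[OF dv]
  have i\<eta>: "1 / \<eta> > 0" using \<eta> by simp
  have y1: "2 * \<bar>ip a0 b0 gu gv\<bar> \<le> ip a0 b0 gu gu / \<eta> + \<eta> * ip a0 b0 gv gv"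
    using ip_young[OF cu(2) cv(2) i\<eta>] by (simp add: mult.commute)
  have y2: "2 * \<bar>ip a0 b0 gu v\<bar> \<le> ip a0 b0 gu gu / \<eta> + \<eta> * ip a0 b0 v v"
    using ip_young[OF cu(2) cv(1) i\<eta>] by (simp add: mult.commute)
  have y3: "2 * \<bar>wip a0 b0 c u v\<bar> \<le> wip a0 b0 c u u / \<eta> + \<eta> * wip a0 b0 c v v"
    using wip_young[OF cu(1) cv(1) i\<eta>] by (simp add: mult.commute)
  have y4: "2 * \<bar>stab a0 b0 L \<tau> bb Eu Ev\<bar> \<le> stab a0 b0 L \<tau> bb Eu Eu / \<eta> + \<eta> * stab a0 b0 L \<tau> bb Ev Ev"
    using stab_young[OF \<tau>0 i\<eta> cu(3) cv(3)] by (simp add: mult.commute)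
  have "\<bar>bb\<bar> * ip a0 b0 v v \<le> \<bar>bb\<bar> / \<sigma>0 * wip a0 b0 c v v"
    using mult_left_mono[OF wip_ge_ip[OF cv(1)], of "\<bar>bb\<bar> / \<sigma>0"] \<sigma>0 by simp
  moreover have "\<bar>bb\<bar> / \<sigma>0 * (\<epsilon> * ip a0 b0 gv gv + stab a0 b0 L \<tau> bb Ev Ev + \<theta> * (bb\<^sup>2 * ip a0 b0 gv gv)) \<ge> 0"
    using energy_parts_nonneg[OF dv] \<sigma>0 by (intro mult_nonneg_nonneg) auto
  ultimately have v: "\<epsilon> * ip a0 b0 gv gv + \<bar>bb\<bar> * ip a0 b0 v v + wip a0 b0 c v v + stab a0 b0 L \<tau> bb Ev Ev
      \<le> (1 + \<bar>bb\<bar> / \<sigma>0) * energy v gv Ev"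
    using energy_parts_nonneg[OF dv] unfolding energy_def by (simp add: algebra_simps)
  have "\<bar>aMQ_expr u gu Eu v gv Ev\<bar> \<le> \<bar>\<epsilon> * ip a0 b0 gu gv\<bar> + \<bar>bb * ip a0 b0 gu v\<bar>
      + \<bar>wip a0 b0 c u v\<bar> + \<bar>stab a0 b0 L \<tau> bb Eu Ev\<bar>"
    unfolding aMQ_expr_def by (meson abs_triangle_ineq add_mono order_trans order_refl)
  then have "2 * \<bar>aMQ_expr u gu Eu v gv Ev\<bar> \<le> \<epsilon> * (2 * \<bar>ip a0 b0 gu gv\<bar>) + \<bar>bb\<bar> * (2 * \<bar>ip a0 b0 gu v\<bar>)
      + 2 * \<bar>wip a0 b0 c u v\<bar> + 2 * \<bar>stab a0 b0 L \<tau> bb Eu Ev\<bar>"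
    using \<epsilon> by (simp add: abs_mult)
  also have "\<dots> \<le> \<epsilon> * (ip a0 b0 gu gu / \<eta> + \<eta> * ip a0 b0 gv gv) + \<bar>bb\<bar> * (ip a0 b0 gu gu / \<eta> + \<eta> * ip a0 b0 v v)
      + (wip a0 b0 c u u / \<eta> + \<eta> * wip a0 b0 c v v) + (stab a0 b0 L \<tau> bb Eu Eu / \<eta> + \<eta> * stab a0 b0 L \<tau> bb Ev Ev)"
    using mult_left_mono[OF y1 less_imp_le[OF \<epsilon>]] mult_left_mono[OF y2 abs_ge_zero[of bb]] y3 y4 by linarith
  also have "\<dots> = ((\<epsilon> + \<bar>bb\<bar>) * ip a0 b0 gu gu + wip a0 b0 c u u + stab a0 b0 L \<tau> bb Eu Eu) / \<eta>
      + \<eta> * (\<epsilon> * ip a0 b0 gv gv + \<bar>bb\<bar> * ip a0 b0 v v + wip a0 b0 c v v + stab a0 b0 L \<tau> bb Ev Ev)"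
    by (simp add: algebra_simps add_divide_distrib)
  finally show ?thesis using mult_left_mono[OF v less_imp_le[OF \<eta>]] by linarith
qed

lemma aMQ_le_normMQSD:
  assumes u: "u \<in> Vh a0 b0 N p"
  obtains C where "C \<ge> 0" and "\<And>v. v \<in> Vh a0 b0 N p \<Longrightarrow> \<bar>aMQ u v\<bar> \<le> C * normMQSD v"
    and "normMQSD u = 0 \<Longrightarrow> C = 0"
proof -
  obtain gu Eu where du: "has_derivs u gu Eu" using Vh_has_derivs[OF u] by blast
  define Cu where "Cu = (\<epsilon> + \<bar>bb\<bar>) * ip a0 b0 gu gu + wip a0 b0 c u u + stab a0 b0 L \<tau> bb Eu Eu"
  define D where "D = 1 + \<bar>bb\<bar> / \<sigma>0"
  have Cu0: "Cu \<ge> 0" unfolding Cu_def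
    using energy_parts_nonneg[OF du] \<epsilon> ip_nonneg[of a0 b0 gu] by (simp add: add_nonneg_nonneg)
  have D0: "D \<ge> 0" using \<sigma>0 by (simp add: D_def add_nonneg_nonneg)
  have "\<bar>aMQ u v\<bar> \<le> sqrt (Cu * D) * normMQSD v" if v: "v \<in> Vh a0 b0 N p" for v
  proof -
    obtain gv Ev where dv: "has_derivs v gv Ev" using Vh_has_derivs[OF v] by blast
    have "(aMQ u v)\<^sup>2 \<le> Cu * (D * energy v gv Ev)"
      unfolding aMQ_eq[OF du dv]
      by (rule sq_le_mult_if_young[OF Cu0]) (use D0 energy_nonneg[OF dv] aMQ_expr_young[OF du dv] in
          \<open>auto simp: Cu_def D_def\<close>)
    then have "\<bar>aMQ u v\<bar> \<le> sqrt (Cu * (D * energy v gv Ev))" by (simp add: real_le_rsqrt)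
    then show ?thesis by (simp add: normMQSD_eq[OF dv] real_sqrt_mult mult.assoc)
  qed
  moreover have "Cu = 0" if "normMQSD u = 0"
  proof -
    have "energy u gu Eu = 0" using that energy_nonneg[OF du] by (simp add: normMQSD_eq[OF du])
    then have "\<epsilon> * ip a0 b0 gu gu = 0" "wip a0 b0 c u u = 0" "stab a0 b0 L \<tau> bb Eu Eu = 0"
      using energy_parts_nonneg[OF du] unfolding energy_def by linarith+
    then show ?thesis using \<epsilon> by (simp add: Cu_def)
  qed
  ultimately show ?thesis using that[of "sqrt (Cu * D)"] Cu0 D0 by simp
qed

lemma nonzero_on_if_normMQSD_ne_0:
  assumes w: "w \<in> Vh a0 b0 N p" and "normMQSD w \<noteq> 0"
  shows "nonzero_on a0 b0 w"
proof (rule ccontr)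
  assume "\<not> nonzero_on a0 b0 w"
  then have w0: "\<And>x. x \<in> {a0..b0} \<Longrightarrow> w x = 0" unfolding nonzero_on_def by auto
  have "wip a0 b0 c w w = 0"
    unfolding wip_def by (subst set_lebesgue_integral_cong[where g="\<lambda>x. 0"]) (auto simp: w0)
  then have "energy w (\<lambda>x. 0) (\<lambda>k x. 0) = 0" by (simp add: energy_def stab_def ip_def)
  then show False using assms normMQSD_eq[OF has_derivs_vanishing[OF w w0]] by simp
qed

lemma infsup_pairing:
  assumes q: "q \<in> spline_space a0 b0 (N div 2 ^ L) (p - 1)" and Q: "ip a0 b0 q q > 0"
  obtains w where "w \<in> Vh a0 b0 N p" and "l2norm a0 b0 w > 0"
    and "\<alpha> / 2 * sqrt (ip a0 b0 q q) * l2norm a0 b0 w \<le> ip a0 b0 w q"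
proof -
  let ?X = "(\<lambda>v. ip a0 b0 v q / l2norm a0 b0 v) ` {v \<in> Vh a0 b0 N p. nonzero_on a0 b0 v}"
  have "?X \<noteq> {}" using bubble_in_Vh[OF p2] bubble_nonzero_on[OF ab] by blast
  moreover have "\<alpha> / 2 * sqrt (ip a0 b0 q q) < Sup ?X"
  proof -
    have "\<alpha> * sqrt (ip a0 b0 q q) \<le> Sup ?X" using infsup q by (simp add: l2norm_def)
    moreover have "\<alpha> / 2 * sqrt (ip a0 b0 q q) < \<alpha> * sqrt (ip a0 b0 q q)" using \<alpha> Q by simp
    ultimately show ?thesis by linarith
  qed
  ultimately have "\<exists>x\<in>?X. \<alpha> / 2 * sqrt (ip a0 b0 q q) < x" by (rule less_cSupD)
  then obtain w where w: "w \<in> Vh a0 b0 N p"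
    and wq: "\<alpha> / 2 * sqrt (ip a0 b0 q q) < ip a0 b0 w q / l2norm a0 b0 w"
    by blast
  have "\<alpha> / 2 * sqrt (ip a0 b0 q q) > 0" using \<alpha> Q by simp
  then have "l2norm a0 b0 w \<noteq> 0" using wq by auto
  then have lw: "l2norm a0 b0 w > 0" by (simp add: l2norm_def ip_nonneg order_less_le)
  with wq have "\<alpha> / 2 * sqrt (ip a0 b0 q q) * l2norm a0 b0 w \<le> ip a0 b0 w q"
    by (simp add: pos_less_divide_eq)
  with w lw show ?thesis by (rule that)
qed

lemma infsup_witness:
  assumes q: "q \<in> spline_space a0 b0 (N div 2 ^ L) (p - 1)"
  obtains z where "z \<in> Vh a0 b0 N p" and "ip a0 b0 z z = ip a0 b0 q q" and "\<alpha> / 2 * ip a0 b0 q q \<le> ip a0 b0 q z"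
proof (cases "ip a0 b0 q q = 0")
  case True
  have "(\<lambda>y. 0 * ((y - a0) * (b0 - y))) \<in> Vh a0 b0 N p" by (rule Vh_scale[OF bubble_in_Vh[OF p2]])
  then show ?thesis using that[of "\<lambda>y. 0"] True by (simp add: ip_def)
next
  case False
  define Q where "Q = ip a0 b0 q q"
  have Q: "Q > 0" using False ip_nonneg[of a0 b0 q] by (simp add: Q_def)
  obtain w where w: "w \<in> Vh a0 b0 N p" and lw0: "l2norm a0 b0 w > 0"
    and wq: "\<alpha> / 2 * sqrt Q * l2norm a0 b0 w \<le> ip a0 b0 w q"
    using infsup_pairing[OF q] Q unfolding Q_def by blast
  define lw where "lw = l2norm a0 b0 w"
  define t where "t = sqrt Q / lw"
  have t: "t > 0" "t * t * (lw * lw) = Q" using lw0 Q by (simp_all add: lw_def t_def field_simps)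
  define z where "z y = t * w y" for y
  have "z \<in> Vh a0 b0 N p" unfolding z_def using Vh_scale[OF w] .
  moreover have "ip a0 b0 w w = lw * lw"
    using ip_nonneg[of a0 b0 w] by (simp add: lw_def l2norm_def)
  then have "ip a0 b0 z z = t * t * (lw * lw)"
    unfolding z_def ip_def by (simp add: algebra_simps)
  then have "ip a0 b0 z z = Q" using t by simp
  moreover have "\<alpha> / 2 * Q \<le> ip a0 b0 q z"
  proof -
    from mult_left_mono[OF wq less_imp_le[OF t(1)]]
    have "t * (\<alpha> / 2 * sqrt Q * lw) \<le> ip a0 b0 q z"
      unfolding z_def lw_def by (simp add: ip_scale_right ip_comm)
    moreover have "t * (\<alpha> / 2 * sqrt Q * lw) = \<alpha> / 2 * Q"
      using lw0 Q by (simp add: lw_def t_def field_simps)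
    ultimately show ?thesis by linarith
  qed
  ultimately show ?thesis using that by (simp add: Q_def)
qed

lemma normMQSD_sq:
  assumes "has_derivs w gw Ew"
  shows "normMQSD w \<ge> 0" "(normMQSD w)\<^sup>2 = energy w gw Ew"
  using normMQSD_eq[OF assms] energy_nonneg[OF assms] by simp_all

lemma normMQSD_nonneg:
  assumes "w \<in> Vh a0 b0 N p"
  shows "normMQSD w \<ge> 0"
proof -
  obtain gw Ew where "has_derivs w gw Ew" using Vh_has_derivs[OF assms] by blast
  then show ?thesis by (rule normMQSD_sq(1))
qed

lemma aMQ_self_if_no_convection:
  assumes u: "u \<in> Vh a0 b0 N p" and "\<theta> * bb = 0"
  shows "aMQ u u = (normMQSD u)\<^sup>2"
proof -
  obtain gu Eu where du: "has_derivs u gu Eu" using Vh_has_derivs[OF u] by blast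
  show ?thesis using assms by (auto simp: aMQ_eq[OF du du] aMQ_expr_self[OF u du] normMQSD_sq[OF du])
qed

end

section \<open>The convective test function\<close>

text \<open>The convective case: \<open>u\<close> is tested with \<open>u + \<delta> \<theta> b z\<close>, where \<open>z\<close> comes from the inf-sup
  condition applied to \<open>q = (\<Pi>\<^sub>L u)'\<close>.\<close>

locale convective_step = mq_setting +
  fixes u gu Eu z gz Ez
  assumes u: "u \<in> Vh a0 b0 N p" and du: "has_derivs u gu Eu"
    and z: "z \<in> Vh a0 b0 N p" and dz: "has_derivs z gz Ez"
    and z_norm: "ip a0 b0 z z = ip a0 b0 (\<lambda>x. gu x - Eu L x) (\<lambda>x. gu x - Eu L x)"
    and z_infsup: "\<alpha> / 2 * ip a0 b0 (\<lambda>x. gu x - Eu L x) (\<lambda>x. gu x - Eu L x)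
                     \<le> ip a0 b0 (\<lambda>x. gu x - Eu L x) z"
    and z_deriv: "ip a0 b0 gz gz \<le> Kh * ip a0 b0 z z"
    and z_errors: "\<forall>k\<in>{1..L}. ip a0 b0 (Ez k) (Ez k) \<le> 2 * Kh * (1 + C\<Pi>\<^sup>2) * ip a0 b0 z z"
    and convective: "\<theta> * bb \<noteq> 0"
begin

abbreviation "q \<equiv> \<lambda>x. gu x - Eu L x"

abbreviation "A \<equiv> \<epsilon> * ip a0 b0 gu gu"
abbreviation "B \<equiv> wip a0 b0 c u u"
abbreviation "S \<equiv> stab a0 b0 L \<tau> bb Eu Eu"
abbreviation "T \<equiv> \<theta> * (bb\<^sup>2 * ip a0 b0 gu gu)"
abbreviation "R \<equiv> \<theta> * (bb\<^sup>2 * ip a0 b0 q q)"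
abbreviation "\<mu> \<equiv> \<theta> * \<bar>bb\<bar>"

lemma cont: "continuous_on {a0..b0} u" "continuous_on {a0..b0} gu" "continuous_on {a0..b0} (Eu L)"
    "continuous_on {a0..b0} q" "continuous_on {a0..b0} z" "continuous_on {a0..b0} gz"
  using has_derivs_continuous[OF du] has_derivs_continuous[OF dz] L1
  by (auto intro!: continuous_intros)

lemma parts_nonneg: "A \<ge> 0" "B \<ge> 0" "S \<ge> 0" "T \<ge> 0" "R \<ge> 0"
  using energy_parts_nonneg[OF du] theta_nonneg ip_nonneg[of a0 b0 q] by auto

lemma mu_pos: "\<mu> > 0"
  using convective theta_nonneg by (simp add: order_less_le)

lemma mu_sq_Kh_le: "\<mu>\<^sup>2 * Kh \<le> C\<tau>\<^sup>2 * Kinv"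
proof -
  have "\<mu>\<^sup>2 \<le> (C\<tau> * h)\<^sup>2" using theta_bb_le mu_pos by (intro power_mono) auto
  from mult_right_mono[OF this Kh_nonneg] show ?thesis
    using Kh_mult_h_sq by (simp add: power_mult_distrib algebra_simps)
qed

lemma coarsest_error_le: "\<theta> * (bb\<^sup>2 * ip a0 b0 (Eu L) (Eu L)) \<le> S"
  using stab_ge_coarsest[OF \<tau>0 L1, of bb a0 b0 Eu] by (simp add: \<theta>_def)

lemma T_le: "T \<le> 2 * S + 2 * R"
proof -
  have "ip a0 b0 gu gu = ip a0 b0 (\<lambda>x. Eu L x + 1 * q x) (\<lambda>x. Eu L x + 1 * q x)"
    by (rule ip_cong) simp_all
  also have "\<dots> \<le> 2 * ip a0 b0 (Eu L) (Eu L) + 2 * 1\<^sup>2 * ip a0 b0 q q"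
    by (rule ip_sq_add_scaled_le[OF cont(3,4)])
  finally have "\<theta> * bb\<^sup>2 * ip a0 b0 gu gu \<le> \<theta> * bb\<^sup>2 * (2 * ip a0 b0 (Eu L) (Eu L) + 2 * ip a0 b0 q q)"
    using theta_nonneg by (intro mult_left_mono) auto
  then show ?thesis using coarsest_error_le by (simp add: algebra_simps)
qed

lemma R_le: "R \<le> 2 * T + 2 * S"
proof -
  have "ip a0 b0 q q = ip a0 b0 (\<lambda>x. gu x + (-1) * Eu L x) (\<lambda>x. gu x + (-1) * Eu L x)"
    by (rule ip_cong) simp_all
  also have "\<dots> \<le> 2 * ip a0 b0 gu gu + 2 * (-1)\<^sup>2 * ip a0 b0 (Eu L) (Eu L)"
    by (rule ip_sq_add_scaled_le[OF cont(2,3)])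
  finally have "\<theta> * bb\<^sup>2 * ip a0 b0 q q \<le> \<theta> * bb\<^sup>2 * (2 * ip a0 b0 gu gu + 2 * ip a0 b0 (Eu L) (Eu L))"
    using theta_nonneg by (intro mult_left_mono) auto
  then show ?thesis using coarsest_error_le by (simp add: algebra_simps)
qed

text \<open>The parts of the energy of \<open>z\<close>, scaled by \<open>\<mu>\<^sup>2 = (\<theta> b)\<^sup>2\<close>, are bounded by \<open>R\<close>; this is where
  the upper bound on \<open>\<tau>\<close> and the inverse estimate enter.\<close>

lemma diff_z_le: "\<mu>\<^sup>2 * (\<epsilon> * ip a0 b0 gz gz) \<le> C\<tau> * Kinv * R"
proof -
  have "\<mu>\<^sup>2 * (\<epsilon> * ip a0 b0 gz gz) \<le> \<mu>\<^sup>2 * (\<epsilon> * (Kh * ip a0 b0 q q))"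
    using z_deriv z_norm \<epsilon> by (intro mult_left_mono) auto
  also have "\<dots> = (\<theta> * \<epsilon>) * Kh * R" by (simp add: power2_eq_square algebra_simps)
  also have "\<dots> \<le> (C\<tau> * h\<^sup>2) * Kh * R"
    using theta_eps_le Kh_nonneg parts_nonneg(5) by (intro mult_right_mono) auto
  finally show ?thesis using Kh_mult_h_sq by (simp add: algebra_simps)
qed

lemma react_z_le: "\<mu>\<^sup>2 * wip a0 b0 c z z \<le> C\<tau> * (b0 - a0) * Mc / \<bar>bb\<bar> * R"
proof -
  have "\<mu>\<^sup>2 * wip a0 b0 c z z \<le> \<mu>\<^sup>2 * (Mc * ip a0 b0 q q)"
    using wip_le_ip[OF cont(5)] z_norm by (intro mult_left_mono) auto
  also have "\<dots> = \<theta> * (Mc * R)" by (simp add: power2_eq_square algebra_simps)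
  also have "\<dots> \<le> C\<tau> * (b0 - a0) / \<bar>bb\<bar> * (Mc * R)"
  proof (rule mult_right_mono)
    have "\<theta> * \<bar>bb\<bar> \<le> C\<tau> * (b0 - a0)"
      using theta_bb_le h_le C\<tau> by (meson less_imp_le mult_left_mono order_trans)
    then show "\<theta> \<le> C\<tau> * (b0 - a0) / \<bar>bb\<bar>" using convective by (simp add: field_simps)
  qed (use Mc1 parts_nonneg(5) in simp)
  finally show ?thesis by (simp add: algebra_simps)
qed

lemma stab_z_le: "\<mu>\<^sup>2 * stab a0 b0 L \<tau> bb Ez Ez \<le> 2 ^ (L + 1) * C\<tau>\<^sup>2 * Kinv * (1 + C\<Pi>\<^sup>2) * R"
proof -
  have "stab a0 b0 L \<tau> bb Ez Ez \<le> \<tau> * bb\<^sup>2 * (2 * Kh * (1 + C\<Pi>\<^sup>2) * ip a0 b0 q q)"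
    by (rule stab_le[OF \<tau>0]) (use z_errors z_norm Kh_nonneg ip_nonneg in auto)
  then have "\<mu>\<^sup>2 * stab a0 b0 L \<tau> bb Ez Ez \<le> \<mu>\<^sup>2 * (\<tau> * bb\<^sup>2 * (2 * Kh * (1 + C\<Pi>\<^sup>2) * ip a0 b0 q q))"
    by (intro mult_left_mono) auto
  also have "\<dots> = 2 ^ L * (\<mu>\<^sup>2 * Kh) * (2 * (1 + C\<Pi>\<^sup>2)) * R"
    unfolding \<theta>_def by (simp add: field_simps power2_eq_square)
  also have "\<dots> \<le> 2 ^ L * (C\<tau>\<^sup>2 * Kinv) * (2 * (1 + C\<Pi>\<^sup>2)) * R"
    using mu_sq_Kh_le parts_nonneg(5) by (intro mult_right_mono mult_left_mono) auto
  finally show ?thesis by (simp add: algebra_simps)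
qed

lemma sd_z_le: "\<mu>\<^sup>2 * (\<theta> * (bb\<^sup>2 * ip a0 b0 gz gz)) \<le> C\<tau>\<^sup>2 * Kinv * R"
proof -
  have "\<mu>\<^sup>2 * (\<theta> * (bb\<^sup>2 * ip a0 b0 gz gz)) \<le> \<mu>\<^sup>2 * (\<theta> * (bb\<^sup>2 * (Kh * ip a0 b0 q q)))"
    using z_deriv z_norm theta_nonneg by (intro mult_left_mono) auto
  also have "\<dots> = (\<mu>\<^sup>2 * Kh) * R" by (simp add: algebra_simps)
  also have "\<dots> \<le> C\<tau>\<^sup>2 * Kinv * R" by (rule mult_right_mono[OF mu_sq_Kh_le parts_nonneg(5)])
  finally show ?thesis .
qed

lemma energy_z_le: "\<mu>\<^sup>2 * energy z gz Ez \<le> (cross_const + C\<tau>\<^sup>2 * Kinv) * R"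
  using diff_z_le react_z_le stab_z_le sd_z_le parts_nonneg(5)
  unfolding energy_def cross_const_def by (simp add: algebra_simps)

lemma cross_conv_le:
  assumes "\<eta> > 0"
  shows "2 * \<bar>\<theta> * bb\<^sup>2 * ip a0 b0 (Eu L) z\<bar> \<le> \<eta> * S + R / \<eta>"
proof -
  have "2 * \<bar>\<theta> * bb\<^sup>2 * ip a0 b0 (Eu L) z\<bar> = (\<theta> * bb\<^sup>2) * (2 * \<bar>ip a0 b0 (Eu L) z\<bar>)"
    using theta_nonneg by (simp add: abs_mult)
  also have "\<dots> \<le> (\<theta> * bb\<^sup>2) * (\<eta> * ip a0 b0 (Eu L) (Eu L) + ip a0 b0 q q / \<eta>)"
    using ip_young[OF cont(3) cont(5) assms] z_norm theta_nonneg by (intro mult_left_mono) auto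
  also have "\<dots> = \<eta> * (\<theta> * (bb\<^sup>2 * ip a0 b0 (Eu L) (Eu L))) + R / \<eta>" by (simp add: algebra_simps)
  also have "\<dots> \<le> \<eta> * S + R / \<eta>" using mult_left_mono[OF coarsest_error_le, of \<eta>] assms by simp
  finally show ?thesis .
qed

lemma cross_diff_le:
  assumes \<eta>: "\<eta> > 0"
  shows "2 * \<bar>\<theta> * bb * \<epsilon> * ip a0 b0 gu gz\<bar> \<le> \<eta> * A + C\<tau> * Kinv * R / \<eta>"
proof -
  have "2 * \<bar>\<mu> * ip a0 b0 gu gz\<bar> \<le> \<eta> * ip a0 b0 gu gu + \<mu>\<^sup>2 * ip a0 b0 gz gz / \<eta>"
    by (rule young_scaled[OF mu_pos \<eta>]) (use ip_young[OF cont(2) cont(6), of "\<eta> / \<mu>"] mu_pos \<eta> in simp)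
  then have "\<epsilon> * (2 * \<bar>\<mu> * ip a0 b0 gu gz\<bar>) \<le> \<epsilon> * (\<eta> * ip a0 b0 gu gu + \<mu>\<^sup>2 * ip a0 b0 gz gz / \<eta>)"
    using \<epsilon> by (intro mult_left_mono) auto
  then have "2 * \<bar>\<theta> * bb * \<epsilon> * ip a0 b0 gu gz\<bar> \<le> \<epsilon> * (\<eta> * ip a0 b0 gu gu + \<mu>\<^sup>2 * ip a0 b0 gz gz / \<eta>)"
    using \<epsilon> theta_nonneg by (simp add: abs_mult algebra_simps)
  also have "\<dots> = \<eta> * A + \<mu>\<^sup>2 * (\<epsilon> * ip a0 b0 gz gz) / \<eta>" by (simp add: algebra_simps)
  also have "\<dots> \<le> \<eta> * A + C\<tau> * Kinv * R / \<eta>"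
    by (intro add_left_mono divide_right_mono) (use diff_z_le \<eta> in auto)
  finally show ?thesis .
qed

lemma cross_react_le:
  assumes \<eta>: "\<eta> > 0"
  shows "2 * \<bar>\<theta> * bb * wip a0 b0 c u z\<bar> \<le> \<eta> * B + C\<tau> * (b0 - a0) * Mc / \<bar>bb\<bar> * R / \<eta>"
proof -
  have "2 * \<bar>\<mu> * wip a0 b0 c u z\<bar> \<le> \<eta> * B + \<mu>\<^sup>2 * wip a0 b0 c z z / \<eta>"
    by (rule young_scaled[OF mu_pos \<eta>]) (use wip_young[OF cont(1) cont(5), of "\<eta> / \<mu>"] mu_pos \<eta> in simp)
  also have "\<dots> \<le> \<eta> * B + C\<tau> * (b0 - a0) * Mc / \<bar>bb\<bar> * R / \<eta>"
    by (intro add_left_mono divide_right_mono) (use react_z_le \<eta> in auto)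
  finally show ?thesis using theta_nonneg by (simp add: abs_mult)
qed

lemma cross_stab_le:
  assumes \<eta>: "\<eta> > 0"
  shows "2 * \<bar>\<theta> * bb * stab a0 b0 L \<tau> bb Eu Ez\<bar> \<le> \<eta> * S + 2 ^ (L + 1) * C\<tau>\<^sup>2 * Kinv * (1 + C\<Pi>\<^sup>2) * R / \<eta>"
proof -
  have "2 * \<bar>\<mu> * stab a0 b0 L \<tau> bb Eu Ez\<bar> \<le> \<eta> * S + \<mu>\<^sup>2 * stab a0 b0 L \<tau> bb Ez Ez / \<eta>"
    by (rule young_scaled[OF mu_pos \<eta>])
       (use stab_young[OF \<tau>0 _ has_derivs_continuous(3)[OF du] has_derivs_continuous(3)[OF dz], of "\<eta> / \<mu>"]
          mu_pos \<eta> in simp)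
  also have "\<dots> \<le> \<eta> * S + 2 ^ (L + 1) * C\<tau>\<^sup>2 * Kinv * (1 + C\<Pi>\<^sup>2) * R / \<eta>"
    by (intro add_left_mono divide_right_mono) (use stab_z_le \<eta> in auto)
  finally show ?thesis using theta_nonneg by (simp add: abs_mult)
qed

abbreviation "W \<equiv> \<theta> * bb * \<epsilon> * ip a0 b0 gu gz + \<theta> * bb\<^sup>2 * ip a0 b0 (Eu L) z
  + \<theta> * bb * wip a0 b0 c u z + \<theta> * bb * stab a0 b0 L \<tau> bb Eu Ez"

lemma cross_terms_le:
  assumes "\<eta> > 0"
  shows "2 * \<bar>W\<bar> \<le> \<eta> * (A + B + 2 * S) + cross_const * R / \<eta>"
proof -
  have "2 * \<bar>W\<bar> \<le> 2 * \<bar>\<theta> * bb * \<epsilon> * ip a0 b0 gu gz\<bar> + 2 * \<bar>\<theta> * bb\<^sup>2 * ip a0 b0 (Eu L) z\<bar>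
      + 2 * \<bar>\<theta> * bb * wip a0 b0 c u z\<bar> + 2 * \<bar>\<theta> * bb * stab a0 b0 L \<tau> bb Eu Ez\<bar>"
    by (smt (verit) abs_triangle_ineq)
  also have "\<dots> \<le> \<eta> * (A + B + 2 * S) + cross_const * R / \<eta>"
  proof -
    have "C\<tau> * Kinv * R / \<eta> + R / \<eta> + C\<tau> * (b0 - a0) * Mc / \<bar>bb\<bar> * R / \<eta>
        + 2 ^ (L + 1) * C\<tau>\<^sup>2 * Kinv * (1 + C\<Pi>\<^sup>2) * R / \<eta> = cross_const * R / \<eta>"
      unfolding cross_const_def by (simp add: add_divide_distrib algebra_simps)
    then show ?thesis
      using cross_diff_le[OF assms] cross_conv_le[OF assms] cross_react_le[OF assms] cross_stab_le[OF assms]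
      by (simp add: algebra_simps)
  qed
  finally show ?thesis .
qed

abbreviation "s \<equiv> delta * \<theta> * bb"
abbreviation "v \<equiv> \<lambda>y. u y + s * z y"
abbreviation "gv \<equiv> \<lambda>x. gu x + s * gz x"
abbreviation "Ev \<equiv> \<lambda>k x. Eu k x + s * Ez k x"

lemma test_function_in_Vh: "v \<in> Vh a0 b0 N p"
  by (rule Vh_add_scaled[OF u z])

lemma test_function_derivs: "has_derivs v gv Ev"
  by (rule has_derivs_add_scaled[OF u z du dz])

lemma aMQ_test_eq: "aMQ u v = A + B + S + delta * (W + \<theta> * bb\<^sup>2 * ip a0 b0 q z)"
proof -
  have "ip a0 b0 gu z = ip a0 b0 z (\<lambda>x. Eu L x + 1 * q x)" by (subst ip_comm) (rule ip_cong, simp_all)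
  also have "\<dots> = ip a0 b0 z (Eu L) + 1 * ip a0 b0 z q" by (rule ip_add_scaled[OF cont(5,3,4)])
  finally have split: "ip a0 b0 gu z = ip a0 b0 (Eu L) z + ip a0 b0 q z"
    using ip_comm[of a0 b0 z "Eu L"] ip_comm[of a0 b0 z q] by simp
  have "aMQ u v = aMQ_expr u gu Eu u gu Eu + s * aMQ_expr u gu Eu z gz Ez"
    by (simp add: aMQ_eq[OF du test_function_derivs] aMQ_expr_add_scaled[OF du du dz])
  also have "aMQ_expr u gu Eu u gu Eu = A + B + S"
    by (simp add: aMQ_expr_self[OF u du] energy_def)
  finally show ?thesis unfolding aMQ_expr_def split by (simp add: power2_eq_square algebra_simps)
qed

lemma aMQ_test_ge: "coercivity_const / 3 * energy u gu Eu \<le> aMQ u v"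
proof -
  define \<eta> where "\<eta> = 2 * cross_const / \<alpha>"
  have \<eta>: "\<eta> > 0" using cross_const_ge_1 \<alpha> by (simp add: \<eta>_def)
  have \<delta>\<eta>: "delta * \<eta> = 1 / 2" and R\<eta>: "cross_const * R / \<eta> = \<alpha> * R / 2"
    using cross_const_ge_1 \<alpha> by (simp_all add: \<eta>_def delta_def field_simps)
  have "\<alpha> * R / 2 \<le> \<theta> * bb\<^sup>2 * ip a0 b0 q z"
    using mult_left_mono[OF z_infsup, of "\<theta> * bb\<^sup>2"] theta_nonneg by (simp add: algebra_simps)
  then have "\<alpha> * R / 4 - \<eta> * (A + B + 2 * S) / 2 \<le> W + \<theta> * bb\<^sup>2 * ip a0 b0 q z"
  proof -
    have "- w \<le> a / 2 + r / 2" if "2 * \<bar>w\<bar> \<le> a + r" for w a r :: real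
      using that by linarith
    from this[OF cross_terms_le[OF \<eta>]]
    have "- W \<le> \<eta> * (A + B + 2 * S) / 2 + \<alpha> * R / 4" unfolding R\<eta> by simp
    then show ?thesis using \<open>\<alpha> * R / 2 \<le> \<theta> * bb\<^sup>2 * ip a0 b0 q z\<close> by linarith
  qed
  from mult_left_mono[OF this less_imp_le[OF delta_pos]]
  have "delta * \<alpha> / 4 * R - (delta * \<eta>) * (A + B + 2 * S) / 2 \<le> delta * (W + \<theta> * bb\<^sup>2 * ip a0 b0 q z)"
    by (simp add: algebra_simps)
  moreover have "A + B + 2 * S = (A + B + S) + S" by simp
  ultimately have d: "delta * \<alpha> / 4 * R - ((A + B + S) + S) / 4 \<le> delta * (W + \<theta> * bb\<^sup>2 * ip a0 b0 q z)"
    unfolding \<delta>\<eta> by simp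
  have c1: "coercivity_const * (A + B + S) \<le> 1 / 2 * (A + B + S)"
    using parts_nonneg by (intro mult_right_mono) (auto simp: coercivity_const_def)
  have c2: "coercivity_const * R \<le> delta * \<alpha> / 4 * R"
    using parts_nonneg by (intro mult_right_mono) (auto simp: coercivity_const_def)
  have combine: "c * (X + r) \<le> X + d"
    if "dr - (X + Y) / 4 \<le> d" "c * X \<le> 1 / 2 * X" "c * r \<le> dr" "Y \<le> X" for c X Y r d dr :: real
    using that unfolding distrib_left by argo
  have "coercivity_const / 3 * energy u gu Eu \<le> coercivity_const / 3 * (3 * (A + B + S + R))"
    using T_le parts_nonneg coercivity_const_pos unfolding energy_def by (intro mult_left_mono) auto
  also have "\<dots> = coercivity_const * (A + B + S + R)" by simp
  also have "\<dots> \<le> aMQ u v"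
    unfolding aMQ_test_eq by (rule combine[OF d c1 c2]) (use parts_nonneg in simp)
  finally show ?thesis .
qed

lemma energy_test_le: "energy v gv Ev \<le> test_norm_const * energy u gu Eu"
proof -
  have "s\<^sup>2 * energy z gz Ez = delta\<^sup>2 * (\<mu>\<^sup>2 * energy z gz Ez)"
    by (simp add: power2_eq_square algebra_simps)
  also have "\<dots> \<le> delta\<^sup>2 * ((cross_const + C\<tau>\<^sup>2 * Kinv) * R)"
    by (rule mult_left_mono[OF energy_z_le]) simp
  also have "\<dots> \<le> delta\<^sup>2 * ((cross_const + C\<tau>\<^sup>2 * Kinv) * (2 * energy u gu Eu))"
    using R_le parts_nonneg cross_const_ge_1 Kinv unfolding energy_def
    by (intro mult_left_mono) auto
  finally show ?thesis
    using energy_add_scaled_le[OF du dz, of s] unfolding test_norm_const_def by (simp add: algebra_simps)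
qed

end

section \<open>Inf-sup stability\<close>

context mq_setting
begin

lemma exists_test_function:
  assumes u: "u \<in> Vh a0 b0 N p"
  obtains v where "v \<in> Vh a0 b0 N p" "coercivity_const / 3 * (normMQSD u)\<^sup>2 \<le> aMQ u v"
    "normMQSD v \<le> sqrt test_norm_const * normMQSD u"
proof -
  have norm_le: "normMQSD v \<le> sqrt test_norm_const * normMQSD u"
    if "v \<in> Vh a0 b0 N p" "(normMQSD v)\<^sup>2 \<le> test_norm_const * (normMQSD u)\<^sup>2" for v
    using real_sqrt_le_mono[OF that(2)] normMQSD_nonneg[OF that(1)] normMQSD_nonneg[OF u]
    by (simp add: real_sqrt_mult)
  obtain gu Eu where du: "has_derivs u gu Eu"
    and q: "(\<lambda>x. gu x - Eu L x) \<in> spline_space a0 b0 (N div 2 ^ L) (p - 1)"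
    using Vh_has_derivs[OF u] by blast
  show ?thesis
  proof (cases "\<theta> * bb = 0")
    case True
    show ?thesis
    proof (rule that[OF u])
      have "coercivity_const / 3 \<le> 1" using coercivity_const_def by simp
      then show "coercivity_const / 3 * (normMQSD u)\<^sup>2 \<le> aMQ u u"
        unfolding aMQ_self_if_no_convection[OF u True] using coercivity_const_pos
        by (intro mult_left_le_one_le) auto
      have "1 \<le> test_norm_const"
        using cross_const_ge_1 Kinv by (simp add: test_norm_const_def add_increasing2)
      from mult_right_mono[OF this zero_le_power2[of "normMQSD u"]]
      show "normMQSD u \<le> sqrt test_norm_const * normMQSD u" by (intro norm_le[OF u]) simp
    qed
  next
    case False
    obtain z where z: "z \<in> Vh a0 b0 N p" and z_norm: "ip a0 b0 z z = ip a0 b0 (\<lambda>x. gu x - Eu L x) (\<lambda>x. gu x - Eu L x)"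
      and z_infsup: "\<alpha> / 2 * ip a0 b0 (\<lambda>x. gu x - Eu L x) (\<lambda>x. gu x - Eu L x) \<le> ip a0 b0 (\<lambda>x. gu x - Eu L x) z"
      using infsup_witness[OF q] by blast
    obtain gz Ez where dz: "has_derivs z gz Ez" and "ip a0 b0 gz gz \<le> Kh * ip a0 b0 z z"
      and "\<forall>k\<in>{1..L}. ip a0 b0 (Ez k) (Ez k) \<le> 2 * Kh * (1 + C\<Pi>\<^sup>2) * ip a0 b0 z z"
      using Vh_has_derivs[OF z] by blast
    then interpret conv: convective_step a0 b0 c Mc \<sigma>0 p L bb C\<tau> \<alpha> C\<Pi> Kinv \<epsilon> M \<tau> Proj u gu Eu z gz Ez
      using u du z dz z_norm z_infsup False by unfold_locales
    show ?thesis
      using that[OF conv.test_function_in_Vh] norm_le[OF conv.test_function_in_Vh] conv.aMQ_test_ge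
        conv.energy_test_le normMQSD_sq(2)[OF conv.test_function_derivs] normMQSD_sq(2)[OF du] by simp
  qed
qed

lemma aMQ_eq_0_if_normMQSD_eq_0:
  assumes u: "u \<in> Vh a0 b0 N p" and v: "v \<in> Vh a0 b0 N p" and "normMQSD u = 0 \<or> normMQSD v = 0"
  shows "aMQ u v = 0"
proof -
  obtain C where "\<bar>aMQ u v\<bar> \<le> C * normMQSD v" and "normMQSD u = 0 \<Longrightarrow> C = 0"
    using aMQ_le_normMQSD[OF u] v by metis
  then show ?thesis using assms(3) by auto
qed

abbreviation quotients :: "(real \<Rightarrow> real) \<Rightarrow> real set" where
  "quotients u \<equiv> (\<lambda>v. aMQ u v / normMQSD v) ` {v \<in> Vh a0 b0 N p. nonzero_on a0 b0 v}"

lemma bdd_above_quotients: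
  assumes u: "u \<in> Vh a0 b0 N p"
  shows "bdd_above (quotients u)"
proof -
  obtain C where C0: "C \<ge> 0" and C: "\<And>v. v \<in> Vh a0 b0 N p \<Longrightarrow> \<bar>aMQ u v\<bar> \<le> C * normMQSD v"
    using aMQ_le_normMQSD[OF u] by blast
  have "y \<le> C" if "y \<in> quotients u" for y
  proof -
    from that obtain v where v: "v \<in> Vh a0 b0 N p" and y: "y = aMQ u v / normMQSD v" by blast
    show "y \<le> C"
    proof (cases "normMQSD v = 0")
      case False
      then have "normMQSD v > 0" using normMQSD_nonneg[OF v] by simp
      moreover have "aMQ u v \<le> C * normMQSD v" using C[OF v] by (rule order_trans[OF abs_ge_self])
      ultimately show ?thesis by (simp add: y pos_divide_le_eq)
    qed (simp add: y C0)
  qed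
  then show ?thesis by (rule bdd_aboveI)
qed

lemma infsup_MQSD:
  assumes u: "u \<in> Vh a0 b0 N p"
  shows "beta * normMQSD u \<le> Sup (quotients u)"
proof (cases "normMQSD u = 0")
  case True
  let ?b = "\<lambda>x. (x - a0) * (b0 - x)"
  have b: "?b \<in> Vh a0 b0 N p" "nonzero_on a0 b0 ?b" using bubble_in_Vh[OF p2] bubble_nonzero_on[OF ab] by auto
  then have "aMQ u ?b / normMQSD ?b \<in> quotients u" by blast
  then have "aMQ u ?b / normMQSD ?b \<le> Sup (quotients u)" by (rule cSup_upper[OF _ bdd_above_quotients[OF u]])
  then show ?thesis using True aMQ_eq_0_if_normMQSD_eq_0[OF u b(1)] by simp
next
  case False
  then have nu: "normMQSD u > 0" using normMQSD_nonneg[OF u] by simp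
  obtain v where v: "v \<in> Vh a0 b0 N p" and a: "coercivity_const / 3 * (normMQSD u)\<^sup>2 \<le> aMQ u v"
    and nv: "normMQSD v \<le> sqrt test_norm_const * normMQSD u"
    using exists_test_function[OF u] by blast
  have "0 < coercivity_const / 3 * (normMQSD u)\<^sup>2" using coercivity_const_pos nu by simp
  with a have a_pos: "aMQ u v > 0" by linarith
  then have nv_ne: "normMQSD v \<noteq> 0" using aMQ_eq_0_if_normMQSD_eq_0[OF u v] by auto
  have "beta * normMQSD u = coercivity_const / 3 * (normMQSD u)\<^sup>2 / (sqrt test_norm_const * normMQSD u)"
    using nu unfolding beta_def power2_eq_square by simp
  also have "\<dots> \<le> aMQ u v / (sqrt test_norm_const * normMQSD u)"
    using a nu test_norm_const_pos by (intro divide_right_mono) auto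
  also have "\<dots> \<le> aMQ u v / normMQSD v"
    using a_pos nv_ne normMQSD_nonneg[OF v] nv by (intro divide_left_mono) auto
  also have "\<dots> \<le> Sup (quotients u)"
    by (rule cSup_upper[OF _ bdd_above_quotients[OF u]])
       (use v nonzero_on_if_normMQSD_ne_0[OF v nv_ne] in blast)
  finally show ?thesis .
qed

end

theorem mainTheorem6:
  fixes a0 b0 :: real and p L :: nat and bb :: real and c :: "real \<Rightarrow> real"
    and \<sigma>0 C\<tau> \<alpha>MQ C\<Pi> :: real
  assumes "a0 < b0" and "p \<ge> 2" and "L \<ge> 1"
    and "c \<in> borel_measurable lborel"
    and "\<exists>M. AE x in lborel. x \<in> {a0..b0} \<longrightarrow> \<bar>c x\<bar> \<le> M"
    and "\<sigma>0 > 0" and "AE x in lborel. x \<in> {a0..b0} \<longrightarrow> c x \<ge> \<sigma>0"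
    and "C\<tau> > 0" and "\<alpha>MQ > 0" and "C\<Pi> > 0"
  shows "\<exists>\<beta>>0. \<forall>\<epsilon> M \<tau> Proj.
     \<epsilon> > 0 \<longrightarrow> M \<ge> 1 \<longrightarrow>
     (let N = 2 ^ L * M; h = (b0 - a0) / real N in
       (\<forall>q\<in>spline_space a0 b0 (N div 2 ^ L) (p - 1).
          Sup ((\<lambda>v. ip a0 b0 v q / l2norm a0 b0 v) ` {v \<in> Vh a0 b0 N p. nonzero_on a0 b0 v})
            \<ge> \<alpha>MQ * l2norm a0 b0 q) \<longrightarrow>
       0 \<le> \<tau> \<longrightarrow> \<tau> \<le> C\<tau> * 2 ^ L * h\<^sup>2 / max \<epsilon> (h * \<bar>bb\<bar>) \<longrightarrow>
       (\<forall>k\<in>{1..L}. quasi_interp a0 b0 (N div 2 ^ k) p (2 ^ k * h) C\<Pi> (Proj k)) \<longrightarrow>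
       (\<forall>u\<in>Vh a0 b0 N p.
          Sup ((\<lambda>v. a_MQ a0 b0 L \<epsilon> bb c \<tau> Proj u v / MQSD_norm a0 b0 L \<epsilon> bb c \<tau> Proj v)
                 ` {v \<in> Vh a0 b0 N p. nonzero_on a0 b0 v})
            \<ge> \<beta> * MQSD_norm a0 b0 L \<epsilon> bb c \<tau> Proj u))"
proof -
  obtain Mc0 where "AE x in lborel. x \<in> {a0..b0} \<longrightarrow> \<bar>c x\<bar> \<le> Mc0" using assms(5) by blast
  then have c_bounded: "AE x in lborel. x \<in> {a0..b0} \<longrightarrow> \<bar>c x\<bar> \<le> max Mc0 1"
    by eventually_elim auto
  obtain Kinv :: real where "Kinv > 0" and inverse: "\<And>a0 b0 n f g. a0 < b0 \<Longrightarrow> n \<ge> 1 \<Longrightarrow>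
      piecewise_poly a0 b0 n p f \<Longrightarrow> C1_deriv_on a0 b0 f g \<Longrightarrow>
      integral {a0..b0} (\<lambda>x. (g x)\<^sup>2) \<le> Kinv * (real n / (b0 - a0))\<^sup>2 * integral {a0..b0} (\<lambda>x. (f x)\<^sup>2)"
    using piecewise_poly_inverse_estimate[of p] by blast
  interpret D: mq_data a0 b0 c "max Mc0 1" \<sigma>0 p L bb C\<tau> \<alpha>MQ C\<Pi> Kinv
    using assms c_bounded \<open>Kinv > 0\<close> inverse by unfold_locales (auto elim!: eventually_mono)
  show ?thesis
    unfolding Let_def
    apply (intro exI[of _ D.beta] conjI allI impI ballI D.beta_pos)
    subgoal premises prems for \<epsilon> M \<tau> Proj u
    proof -
      interpret S: mq_setting a0 b0 c "max Mc0 1" \<sigma>0 p L bb C\<tau> \<alpha>MQ C\<Pi> Kinv \<epsilon> M \<tau> Proj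
        using prems by unfold_locales
      show ?thesis by (rule S.infsup_MQSD[OF prems(7)])
    qed
    done
qed

end
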